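(* A smooth cubic surface over $\mathbb{Q}$ that does not contain three pairwise disjoint lines defined over $\mathbb{Q}$ cannot contain exactly four lines defined over $\mathbb{Q}$.
   Context: A line on the surface is defined over $\mathbb{Q}$ if it is cut out by linear forms with rational coefficients and is contained in the surface. *)

theory Defs
  imports Complex_Main
begin

text \<open>Homogeneous coordinates of P^3 are represented by functions nat => field,
  only the coordinates 0,1,2,3 being relevant.  A cubic form in x0..x3 with
  rational coefficients is given by its coefficient function on exponent
  vectors (a,b,c,d) with a+b+c+d = 3.\<close>

type_synonym cubic_form = "nat \<times> nat \<times> nat \<times> nat \<Rightarrow> rat"

definition monos3 :: "(nat \<times> nat \<times> nat \<times> nat) set" where
  "monos3 = {(a,b,c,d). a + b + c + d = 3}"

definition expo :: "nat \<times> nat \<times> nat \<times> nat \<Rightarrow> nat \<Rightarrow> nat" where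
  "expo m k = (case m of (a,b,c,d) \<Rightarrow> [a,b,c,d] ! k)"

definition cubic_eval :: "cubic_form \<Rightarrow> (nat \<Rightarrow> complex) \<Rightarrow> complex" where
  "cubic_eval F x = (\<Sum>m\<in>monos3. of_rat (F m) * (\<Prod>k<4. x k ^ expo m k))"

definition cubic_partial :: "cubic_form \<Rightarrow> nat \<Rightarrow> (nat \<Rightarrow> complex) \<Rightarrow> complex" where
  "cubic_partial F j x = (\<Sum>m\<in>monos3. of_rat (F m) * of_nat (expo m j) *
      (\<Prod>k<4. x k ^ (if k = j then expo m k - 1 else expo m k)))"

text \<open>Smooth cubic surface: no point of P^3 over the algebraically closed field C
  (equivalently over the algebraic closure of Q) lies on the surface and is singular.\<close>
definition smooth_cubic :: "cubic_form \<Rightarrow> bool" where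
  "smooth_cubic F \<longleftrightarrow>
     \<not> (\<exists>x. (\<exists>i<4. x i \<noteq> 0) \<and> cubic_eval F x = 0 \<and> (\<forall>j<4. cubic_partial F j x = 0))"

definition Q4 :: "(nat \<Rightarrow> rat) set" where
  "Q4 = {v. \<forall>i\<ge>4. v i = 0}"

text \<open>A line of P^3 defined over Q = a 2-dimensional Q-linear subspace of Q^4,
  given as the Q-span of two linearly independent rational vectors.\<close>
definition qline :: "(nat \<Rightarrow> rat) set \<Rightarrow> bool" where
  "qline L \<longleftrightarrow> (\<exists>p q. p \<in> Q4 \<and> q \<in> Q4 \<and>
      (\<forall>s t. (\<lambda>i. s * p i + t * q i) = (\<lambda>i. 0) \<longrightarrow> s = 0 \<and> t = 0) \<and>
      L = {(\<lambda>i. s * p i + t * q i) | s t. True})"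

text \<open>The complex points (affine cone) of a rational linear subspace.\<close>
definition cspan :: "(nat \<Rightarrow> rat) set \<Rightarrow> (nat \<Rightarrow> complex) set" where
  "cspan L = {(\<lambda>i. s * of_rat (p i) + t * of_rat (q i)) | s t p q. p \<in> L \<and> q \<in> L}"

definition line_on_surface :: "cubic_form \<Rightarrow> (nat \<Rightarrow> rat) set \<Rightarrow> bool" where
  "line_on_surface F L \<longleftrightarrow> (\<forall>w\<in>cspan L. cubic_eval F w = 0)"

text \<open>Two lines are disjoint (as subvarieties of P^3 over C) iff their cones meet only in 0.\<close>
definition lines_disjoint :: "(nat \<Rightarrow> rat) set \<Rightarrow> (nat \<Rightarrow> rat) set \<Rightarrow> bool" where
  "lines_disjoint L1 L2 \<longleftrightarrow> cspan L1 \<inter> cspan L2 \<subseteq> {\<lambda>i. 0}"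

definition rational_lines :: "cubic_form \<Rightarrow> (nat \<Rightarrow> rat) set set" where
  "rational_lines F = {L. qline L \<and> line_on_surface F L}"

end

theory Submission
  imports Defs "Jordan_Normal_Form.Determinant"
begin

(* Suppose the smooth cubic surface F has exactly four rational lines. As no three of them are
   pairwise disjoint, two of them, L1 and L2, meet. In coordinates \<alpha> e + \<beta> u + \<gamma> v on the
   rational plane they span, F restricts to \<beta> \<gamma> (k1 \<alpha> + k2 \<beta> + k3 \<gamma>) with rational k_i, and
   smoothness forces the linear factor to cut out a third rational line L3, distinct from L1
   and L2. The fourth line d either lies in the plane, hence in L1 \<union> L2 \<union> L3, so it is one of
   them; or it meets the plane in a single point, which lies on some L_i. Then the plane through
   L_i and d contains a third rational line; it must be one of L1, L2, L3, so it lies in both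
   planes, whose intersection is L_i -- a contradiction. *)

lemma less_4_cases: "(k::nat) < 4 \<Longrightarrow> k = 0 \<or> k = 1 \<or> k = 2 \<or> k = 3"
  by auto

lemma sum_lessThan_4: "(\<Sum>j<(4::nat). f j) = f 0 + f 1 + f 2 + (f 3 :: 'a::comm_monoid_add)"
  by (simp add: eval_nat_numeral)

lemma prod_lessThan_4: "(\<Prod>k<(4::nat). f k) = f 0 * f 1 * f 2 * (f 3 :: 'a::comm_monoid_mult)"
  by (simp add: eval_nat_numeral)

lemma exists_unrelated_pair:
  assumes "3 \<le> card S" "\<not> (\<exists>a b c. a \<in> S \<and> b \<in> S \<and> c \<in> S \<and> R a b \<and> R a c \<and> R b c)"
  obtains a b where "a \<in> S" "b \<in> S" "a \<noteq> b" "\<not> R a b"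
proof -
  obtain T where "T \<subseteq> S" "card T = 3" using obtain_subset_with_card_n[OF assms(1)] by blast
  then obtain a b c where abc: "a \<in> S" "b \<in> S" "c \<in> S" "a \<noteq> b" "b \<noteq> c" "a \<noteq> c"
    unfolding card_3_iff by blast
  then have "\<not> R a b \<or> \<not> R a c \<or> \<not> R b c" using assms(2) by blast
  then show ?thesis using that abc by blast
qed

lemma card_4_insert_fourth:
  assumes "card S = 4" "a \<in> S" "b \<in> S" "c \<in> S" "a \<noteq> b" "a \<noteq> c" "b \<noteq> c"
  obtains d where "S = insert d {a, b, c}" "d \<notin> {a, b, c}"
proof -
  have fin: "finite S" using assms(1) by (metis card.infinite zero_neq_numeral)
  have "card {a, b, c} = 3" using assms(5-7) by simp
  then have "\<not> S \<subseteq> {a, b, c}" using assms(1) card_mono[of "{a, b, c}" S] by auto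
  then obtain d where d: "d \<in> S" "d \<notin> {a, b, c}" by blast
  have "S = insert d {a, b, c}"
    using d assms fin by (intro card_seteq[symmetric]) auto
  then show ?thesis using that d(2) by blast
qed

section \<open>The polar form of a cubic\<close>

lemma monos3_explicit: "monos3 = {(3,0,0,0),(0,3,0,0),(0,0,3,0),(0,0,0,3),
  (2,1,0,0),(2,0,1,0),(2,0,0,1),(1,2,0,0),(0,2,1,0),(0,2,0,1),
  (1,0,2,0),(0,1,2,0),(0,0,2,1),(1,0,0,2),(0,1,0,2),(0,0,1,2),
  (1,1,1,0),(1,1,0,1),(1,0,1,1),(0,1,1,1)}" (is "_ = ?M")
proof (rule subset_antisym)
  show "monos3 \<subseteq> ?M"
  proof
    fix m assume "m \<in> monos3"
    then obtain a b c d where m: "m = (a,b,c,d)" and sum: "a + b + c + d = 3"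
      unfolding monos3_def by auto
    have a: "a < 4" and b: "b < 4" and c: "c < 4" and d: "d = 3 - a - b - c" using sum by auto
    from less_4_cases[OF a] less_4_cases[OF b] less_4_cases[OF c] sum d show "m \<in> ?M"
      unfolding m by (elim disjE; simp)
  qed
  show "?M \<subseteq> monos3" unfolding monos3_def by simp
qed

definition mono_indices :: "nat \<times> nat \<times> nat \<times> nat \<Rightarrow> nat list" where
  "mono_indices m =
     (case m of (a,b,c,d) \<Rightarrow> replicate a 0 @ replicate b 1 @ replicate c 2 @ replicate d 3)"

text \<open>The monomial \<open>x\<^sub>i x\<^sub>j x\<^sub>k\<close> is polarised by averaging over the six orderings of
  its three variables, so that \<open>cubic_polar F x x x = cubic_eval F x\<close>.\<close>

definition polar_monomial :: "nat \<times> nat \<times> nat \<times> nat \<Rightarrow>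
    (nat \<Rightarrow> 'a::field_char_0) \<Rightarrow> (nat \<Rightarrow> 'a) \<Rightarrow> (nat \<Rightarrow> 'a) \<Rightarrow> 'a" where
  "polar_monomial m x y z =
     (let i = mono_indices m ! 0; j = mono_indices m ! 1; k = mono_indices m ! 2 in
      (x i*y j*z k + x i*y k*z j + x j*y i*z k + x j*y k*z i + x k*y i*z j + x k*y j*z i) / 6)"

definition cubic_polar :: "cubic_form \<Rightarrow>
    (nat \<Rightarrow> 'a::field_char_0) \<Rightarrow> (nat \<Rightarrow> 'a) \<Rightarrow> (nat \<Rightarrow> 'a) \<Rightarrow> 'a" where
  "cubic_polar F x y z = (\<Sum>m\<in>monos3. of_rat (F m) * polar_monomial m x y z)"

lemma cubic_polar_commute12: "cubic_polar F x y z = cubic_polar F y x z"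
  unfolding cubic_polar_def polar_monomial_def Let_def
  by (intro sum.cong refl) (simp add: algebra_simps)

lemma cubic_polar_commute23: "cubic_polar F x y z = cubic_polar F x z y"
  unfolding cubic_polar_def polar_monomial_def Let_def
  by (intro sum.cong refl) (simp add: algebra_simps)

lemma cubic_polar_add3:
  "cubic_polar F x y (\<lambda>i. z i + z' i) = cubic_polar F x y z + cubic_polar F x y z'"
  unfolding cubic_polar_def polar_monomial_def Let_def sum.distrib[symmetric]
  by (intro sum.cong refl) (simp add: field_simps)

lemma cubic_polar_scale3: "cubic_polar F x y (\<lambda>i. a * z i) = a * cubic_polar F x y z"
  unfolding cubic_polar_def polar_monomial_def Let_def sum_distrib_left
  by (intro sum.cong refl) (simp add: field_simps)

lemma cubic_polar_add1:
  "cubic_polar F (\<lambda>i. x i + x' i) y z = cubic_polar F x y z + cubic_polar F x' y z"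
  unfolding cubic_polar_def polar_monomial_def Let_def sum.distrib[symmetric]
  by (intro sum.cong refl) (simp add: field_simps)

lemma cubic_polar_scale1: "cubic_polar F (\<lambda>i. a * x i) y z = a * cubic_polar F x y z"
  unfolding cubic_polar_def polar_monomial_def Let_def sum_distrib_left
  by (intro sum.cong refl) (simp add: field_simps)

lemma cubic_polar_cong3:
  assumes "\<And>i. i < 4 \<Longrightarrow> z i = z' i"
  shows "cubic_polar F x y z = cubic_polar F x y z'"
proof -
  have index_bound: "mono_indices m ! k < 4" if "m \<in> monos3" "k < 3" for m k
    using that unfolding monos3_explicit mono_indices_def
    by (elim insertE emptyE; auto simp: eval_nat_numeral less_Suc_eq)
  show ?thesis
    unfolding cubic_polar_def polar_monomial_def Let_def
    by (intro sum.cong refl arg_cong2[where f="(*)"]) (simp add: assms index_bound)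
qed

lemma cubic_polar_of_rat:
  "cubic_polar F (\<lambda>i. of_rat (x i)) (\<lambda>i. of_rat (y i)) (\<lambda>i. of_rat (z i))
     = (of_rat (cubic_polar F x y z) :: 'a::field_char_0)"
  unfolding cubic_polar_def polar_monomial_def Let_def
  by (simp add: of_rat_sum of_rat_mult of_rat_add of_rat_divide)

lemma cubic_eval_eq_polar: "cubic_eval F x = cubic_polar F x x x"
proof -
  have "(\<Prod>k<4. x k ^ expo m k) = polar_monomial m x x x" if "m \<in> monos3" for m
    using that unfolding monos3_explicit prod_lessThan_4 polar_monomial_def Let_def
    by (elim insertE emptyE; simp add: mono_indices_def expo_def eval_nat_numeral algebra_simps)
  then show ?thesis
    unfolding cubic_eval_def cubic_polar_def by (intro sum.cong refl) simp
qed

lemma cubic_partial_eq_polar: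
  assumes "j < 4"
  shows "cubic_partial F j x = 3 * cubic_polar F x x (\<lambda>i. if i = j then 1 else 0)"
proof -
  have "of_nat (expo m j) * (\<Prod>k<4. x k ^ (if k = j then expo m k - 1 else expo m k))
      = 3 * polar_monomial m x x (\<lambda>i. if i = j then 1 else 0)" if "m \<in> monos3" for m
    using less_4_cases[OF assms] that
    unfolding monos3_explicit prod_lessThan_4 polar_monomial_def Let_def
    by (elim disjE insertE emptyE; simp add: mono_indices_def expo_def eval_nat_numeral algebra_simps)
  then show ?thesis
    unfolding cubic_partial_def cubic_polar_def sum_distrib_left
    by (intro sum.cong refl) (simp add: algebra_simps)
qed

lemma cubic_polar_square_binomial:
  "cubic_polar F (\<lambda>i. a * x i + b * y i) (\<lambda>i. a * x i + b * y i) z =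
     a^2 * cubic_polar F x x z + 2*a*b * cubic_polar F x y z + b^2 * cubic_polar F y y z"
  unfolding cubic_polar_def polar_monomial_def Let_def sum_distrib_left sum.distrib[symmetric]
  by (intro sum.cong refl) (simp add: field_simps power2_eq_square)

lemma cubic_polar_cube_binomial:
  "cubic_polar F (\<lambda>i. a * x i + b * y i) (\<lambda>i. a * x i + b * y i) (\<lambda>i. a * x i + b * y i) =
     a^3 * cubic_polar F x x x + 3*a^2*b * cubic_polar F x x y
     + 3*a*b^2 * cubic_polar F x y y + b^3 * cubic_polar F y y y"
  unfolding cubic_polar_def polar_monomial_def Let_def sum_distrib_left sum.distrib[symmetric]
  by (intro sum.cong refl) (simp add: field_simps power2_eq_square power3_eq_cube)

lemma cubic_polar_cube_trinomial:
  fixes x y z :: "nat \<Rightarrow> 'a::field_char_0" and a b c :: 'a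
  defines "s \<equiv> \<lambda>i. a * x i + b * y i + c * z i"
  shows "cubic_polar F s s s =
     a^3 * cubic_polar F x x x + 3*a^2*b * cubic_polar F x x y
   + 3*a*b^2 * cubic_polar F x y y + b^3 * cubic_polar F y y y
   + 3*a^2*c * cubic_polar F x x z + 6*a*b*c * cubic_polar F x y z
   + 3*b^2*c * cubic_polar F y y z + 3*a*c^2 * cubic_polar F x z z
   + 3*b*c^2 * cubic_polar F y z z + c^3 * cubic_polar F z z z"
proof -
  let ?t = "\<lambda>i. a * x i + b * y i"
  have s: "s = (\<lambda>i. 1 * ?t i + c * z i)" unfolding s_def by simp
  have "cubic_polar F ?t z z = a * cubic_polar F x z z + b * cubic_polar F y z z"
    by (simp add: cubic_polar_add1 cubic_polar_scale1)
  then show ?thesis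
    unfolding s cubic_polar_cube_binomial cubic_polar_square_binomial
    by (simp add: algebra_simps power2_eq_square power3_eq_cube)
qed

section \<open>Determinants of four vectors\<close>

definition det4 :: "(nat \<Rightarrow> nat \<Rightarrow> 'a::field) \<Rightarrow> 'a" where
  "det4 c = det (mat 4 4 (\<lambda>(i,j). c j i))"

lemma mat_mult_vec_4:
  "i < 4 \<Longrightarrow> (mat 4 4 (\<lambda>(i,j). c j i) *\<^sub>v vec 4 s) $ i = (\<Sum>j<4. s j * (c j i :: 'a::field))"
  unfolding mult_mat_vec_def scalar_prod_def
  by (auto simp: atLeast0LessThan mult.commute intro!: sum.cong)

lemma det4_eq_0_iff:
  "det4 c = 0 \<longleftrightarrow> (\<exists>s. (\<exists>j<4. s j \<noteq> 0) \<and> (\<forall>i<4. (\<Sum>j<4. s j * c j i) = 0))"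
  (is "?det \<longleftrightarrow> ?dep")
proof
  assume ?det
  then obtain v where v: "v \<in> carrier_vec 4" "v \<noteq> 0\<^sub>v 4" "mat 4 4 (\<lambda>(i,j). c j i) *\<^sub>v v = 0\<^sub>v 4"
    unfolding det4_def using det_0_iff_vec_prod_zero_field[of "mat 4 4 (\<lambda>(i,j). c j i)" 4] by auto
  have v_vec: "v = vec 4 (\<lambda>j. v $ j)" using v(1) by auto
  have "\<exists>j<4. v $ j \<noteq> 0" using v(1,2) by (auto simp: vec_eq_iff)
  moreover have "(\<Sum>j<4. v $ j * c j i) = 0" if i: "i < 4" for i
  proof -
    have "(mat 4 4 (\<lambda>(i,j). c j i) *\<^sub>v vec 4 (\<lambda>j. v $ j)) $ i = 0"
      using v(3) v_vec i by (metis index_zero_vec(1))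
    then show ?thesis by (metis mat_mult_vec_4[OF i])
  qed
  ultimately show ?dep by blast
next
  assume ?dep
  then obtain s where s: "\<exists>j<4. s j \<noteq> 0" "\<forall>i<4. (\<Sum>j<4. s j * c j i) = 0" by blast
  have "vec 4 s \<noteq> 0\<^sub>v 4" using s(1) by (auto simp: vec_eq_iff)
  moreover have "mat 4 4 (\<lambda>(i,j). c j i) *\<^sub>v vec 4 s = 0\<^sub>v 4"
  proof (rule eq_vecI)
    fix i assume "i < dim_vec (0\<^sub>v 4 :: 'a vec)"
    then have i: "i < 4" by simp
    show "(mat 4 4 (\<lambda>(i,j). c j i) *\<^sub>v vec 4 s) $ i = 0\<^sub>v 4 $ i"
      using mat_mult_vec_4[OF i, of c s] s(2) i by simp
  qed simp
  ultimately show ?det unfolding det4_def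
    using det_0_iff_vec_prod_zero_field[OF mat_carrier[of 4 4 "\<lambda>(i,j). c j i"]] vec_carrier by blast
qed

lemma det4_nonzero_solvable:
  assumes "det4 c \<noteq> 0"
  obtains s where "\<And>i. i < 4 \<Longrightarrow> (\<Sum>j<4. s j * c j i) = (y i :: 'a::field)"
proof -
  let ?A = "mat 4 4 (\<lambda>(i,j). c j i)"
  have A: "?A \<in> carrier_mat 4 4" by simp
  from det_non_zero_imp_unit[OF A assms[unfolded det4_def], of "()"]
  obtain B where B: "B \<in> carrier_mat 4 4" "?A * B = 1\<^sub>m 4"
    unfolding Units_def ring_mat_def by auto
  let ?s = "B *\<^sub>v vec 4 y"
  have "?A *\<^sub>v ?s = vec 4 y"
    using B A by (subst assoc_mult_mat_vec[symmetric, of _ 4 4 _ 4]) auto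
  moreover have "?s = vec 4 (\<lambda>j. ?s $ j)" using B by auto
  ultimately have "?A *\<^sub>v vec 4 (\<lambda>j. ?s $ j) = vec 4 y" by simp
  then have "(\<Sum>j<4. ?s $ j * c j i) = y i" if i: "i < 4" for i
    using mat_mult_vec_4[OF i, of c "\<lambda>j. ?s $ j"] i by simp
  then show ?thesis using that by blast
qed

lemma det4_of_rat: "det4 (\<lambda>j i. of_rat (c j i)) = (of_rat (det4 c) :: 'a::field_char_0)"
proof -
  have "map_mat of_rat (mat 4 4 (\<lambda>(i,j). c j i)) = (mat 4 4 (\<lambda>(i,j). of_rat (c j i)) :: 'a mat)"
    by (auto simp: eq_matI)
  then show ?thesis unfolding det4_def by (metis of_rat_hom.hom_det)
qed

lemma det4_transpose: "det4 (\<lambda>j i. c i j) = det4 (c :: nat \<Rightarrow> nat \<Rightarrow> 'a::field)"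
proof -
  have "mat 4 4 (\<lambda>(i,j). c i j) = transpose_mat (mat 4 4 (\<lambda>(i,j). c j i))" by (rule eq_matI) auto
  then show ?thesis unfolding det4_def by (metis det_transpose mat_carrier)
qed

definition col4 :: "'a \<Rightarrow> 'a \<Rightarrow> 'a \<Rightarrow> 'a \<Rightarrow> nat \<Rightarrow> 'a" where
  "col4 a b c d j = (if j = 0 then a else if j = 1 then b else if j = 2 then c else d)"

lemma col4_simps [simp]:
  "col4 a b c d 0 = a" "col4 a b c d 1 = b" "col4 a b c d (Suc 0) = b"
  "col4 a b c d 2 = c" "col4 a b c d 3 = d"
  by (simp_all add: col4_def)

lemma sum_col4:
  "(\<Sum>j<4. s j * col4 a b c d j i) = s 0 * a i + s 1 * b i + s 2 * c i + s 3 * (d i :: 'a::comm_ring_1)"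
  by (simp add: sum_lessThan_4 col4_def)

lemma det4_nonzero_independent:
  assumes "det4 (col4 E U V W) \<noteq> 0"
    and "\<forall>i<4. a * E i + b * U i + c * V i + d * W i = (0::'a::field)"
  shows "a = 0 \<and> b = 0 \<and> c = 0 \<and> d = 0"
proof -
  have "\<forall>i<4. (\<Sum>j<4. col4 a b c d j * col4 E U V W j i) = 0"
    using assms(2) unfolding sum_col4 by simp
  then have "\<not> (\<exists>j<4. col4 a b c d j \<noteq> 0)" using assms(1) det4_eq_0_iff by blast
  then have "col4 a b c d j = 0" if "j < 4" for j using that by blast
  from this[of 0] this[of 1] this[of 2] this[of 3] show ?thesis by simp
qed

lemma det4_nonzero_spanning:
  assumes "det4 (col4 E U V W) \<noteq> (0::'a::field)"
  obtains a b c d where "\<forall>i<4. y i = a * E i + b * U i + c * V i + d * W i"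
proof -
  obtain s where "\<And>i. i < 4 \<Longrightarrow> (\<Sum>j<4. s j * col4 E U V W j i) = y i"
    using det4_nonzero_solvable[OF assms] by blast
  then have "\<forall>i<4. y i = s 0 * E i + s 1 * U i + s 2 * V i + s 3 * W i"
    unfolding sum_col4 by simp
  then show ?thesis using that by blast
qed

lemma det4_nonzero_dual:
  assumes "det4 (col4 E U V W) \<noteq> (0::'a::field)"
  obtains \<eta> where "(\<Sum>i<4. \<eta> i * E i) = 0" "(\<Sum>i<4. \<eta> i * U i) = 0"
    "(\<Sum>i<4. \<eta> i * V i) = 0" "(\<Sum>i<4. \<eta> i * W i) = 1"
proof -
  have "det4 (\<lambda>j i. col4 E U V W i j) \<noteq> 0" using assms det4_transpose by metis
  then obtain \<eta> where \<eta>: "\<And>i. i < 4 \<Longrightarrow> (\<Sum>j<4. \<eta> j * col4 E U V W i j) = col4 0 0 0 1 i"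
    using det4_nonzero_solvable[where y = "col4 0 0 0 1"] by blast
  show ?thesis using that \<eta>[of 0] \<eta>[of 1] \<eta>[of 2] \<eta>[of 3] by simp
qed

section \<open>Independence and spans\<close>

definition indep2 :: "(nat \<Rightarrow> 'a::field) \<Rightarrow> (nat \<Rightarrow> 'a) \<Rightarrow> bool" where
  "indep2 p q \<longleftrightarrow> (\<forall>s t. (\<forall>i<4. s * p i + t * q i = 0) \<longrightarrow> s = 0 \<and> t = 0)"

lemma indep2D: "indep2 p q \<Longrightarrow> (\<And>i. i < 4 \<Longrightarrow> s * p i + t * q i = 0) \<Longrightarrow> s = 0 \<and> t = 0"
  unfolding indep2_def by blast

definition span2 :: "(nat \<Rightarrow> 'a::field) \<Rightarrow> (nat \<Rightarrow> 'a) \<Rightarrow> (nat \<Rightarrow> 'a) set" where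
  "span2 p q = {(\<lambda>i. s * p i + t * q i) | s t. True}"

lemma span2_I: "(\<lambda>i. s * p i + t * q i) \<in> span2 p q"
  unfolding span2_def by blast

lemma span2_E:
  assumes "x \<in> span2 p q"
  obtains s t where "x = (\<lambda>i. s * p i + t * q i)"
  using assms unfolding span2_def by blast

lemma span2_base: "p \<in> span2 p q" "q \<in> span2 p q"
  using span2_I[of 1 p 0 q] span2_I[of 0 p 1 q] by simp_all

lemma span2_closed:
  assumes "x \<in> span2 p q" "y \<in> span2 p q"
  shows "(\<lambda>i. a * x i + b * y i) \<in> span2 p q"
proof -
  obtain s t where x: "x = (\<lambda>i. s * p i + t * q i)" using assms(1) by (rule span2_E)
  obtain s' t' where y: "y = (\<lambda>i. s' * p i + t' * q i)" using assms(2) by (rule span2_E)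
  have "(\<lambda>i. a * x i + b * y i) = (\<lambda>i. (a*s + b*s') * p i + (a*t + b*t') * q i)"
    unfolding x y by (simp add: algebra_simps)
  then show ?thesis by (simp add: span2_I)
qed

lemma span2_subset:
  assumes "x \<in> span2 p q" "y \<in> span2 p q"
  shows "span2 x y \<subseteq> span2 p q"
proof
  fix z assume "z \<in> span2 x y"
  then obtain s t where "z = (\<lambda>i. s * x i + t * y i)" by (rule span2_E)
  then show "z \<in> span2 p q" using span2_closed[OF assms] by simp
qed

lemma indep2_nonzero_minor:
  assumes "indep2 p q"
  shows "\<exists>i<4. \<exists>j<4. p i * q j - p j * q i \<noteq> 0"
proof (rule ccontr)
  assume "\<not> ?thesis"
  then have minor: "p i * q j = p j * q i" if "i < 4" "j < 4" for i j
    using that by auto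
  show False
  proof (cases "\<exists>k<4. p k \<noteq> 0")
    case True
    then obtain k where k: "k < 4" "p k \<noteq> 0" by blast
    have "q k * p i + (- p k) * q i = 0" if "i < 4" for i
      using minor[OF that k(1)] by (simp add: algebra_simps)
    then show False using indep2D[OF assms, of "q k" "- p k"] k(2) by simp
  next
    case False
    then have "1 * p i + 0 * q i = 0" if "i < 4" for i using that by auto
    then show False using indep2D[OF assms, of 1 0] by simp
  qed
qed

lemma span2_eq_if_subset:
  assumes "indep2 p q" and sub: "span2 p q \<subseteq> span2 p' q'"
  shows "span2 p q = span2 p' q'"
proof -
  have "p \<in> span2 p' q'" "q \<in> span2 p' q'" using sub span2_base(1,2) by blast+
  obtain a b where p: "p = (\<lambda>i. a * p' i + b * q' i)" using \<open>p \<in> span2 p' q'\<close> by (rule span2_E)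
  obtain c d where q: "q = (\<lambda>i. c * p' i + d * q' i)" using \<open>q \<in> span2 p' q'\<close> by (rule span2_E)
  define D where "D = a * d - b * c"
  have D: "D \<noteq> 0"
  proof
    assume D0: "D = 0"
    have "d * p i + (- b) * q i = 0" "(- c) * p i + a * q i = 0" for i
      unfolding p q using D0 unfolding D_def by (simp_all add: algebra_simps)
    then have "d = 0 \<and> - b = 0" "- c = 0 \<and> a = 0"
      using indep2D[OF assms(1)] by blast+
    then have "1 * p i + 0 * q i = 0" for i unfolding p by simp
    then show False using indep2D[OF assms(1), of 1 0] by simp
  qed
  have p': "p' = (\<lambda>i. (d/D) * p i + (-b/D) * q i)"
  proof
    fix i
    have "(d/D) * p i + (-b/D) * q i = ((a*d - b*c)/D) * p' i"
      unfolding p q using D by (simp add: field_simps)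
    then show "p' i = (d/D) * p i + (-b/D) * q i" using D unfolding D_def by simp
  qed
  have q': "q' = (\<lambda>i. (-c/D) * p i + (a/D) * q i)"
  proof
    fix i
    have "(-c/D) * p i + (a/D) * q i = ((a*d - b*c)/D) * q' i"
      unfolding p q using D by (simp add: field_simps)
    then show "q' i = (-c/D) * p i + (a/D) * q i" using D unfolding D_def by simp
  qed
  have "span2 p' q' \<subseteq> span2 p q"
    by (rule span2_subset) (simp_all only: p' q' span2_I)
  with sub show ?thesis by (rule subset_antisym)
qed

lemma span2_rebase:
  assumes "indep2 p q" "e \<in> span2 p q" "e \<noteq> (\<lambda>i. 0)"
  obtains u where "u \<in> {p, q}" "indep2 e u" "span2 p q = span2 e u"
proof -
  obtain a b where e: "e = (\<lambda>i. a * p i + b * q i)" using assms(2) by (rule span2_E)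
  show ?thesis
  proof (cases "a = 0")
    case False
    have "indep2 e q" unfolding indep2_def
    proof (intro allI impI)
      fix s t assume "\<forall>i<4. s * e i + t * q i = 0"
      then have "\<forall>i<4. (s*a) * p i + (s*b + t) * q i = 0" unfolding e by (simp add: algebra_simps)
      then have "s*a = 0 \<and> s*b + t = 0" using indep2D[OF assms(1)] by blast
      then show "s = 0 \<and> t = 0" using False by auto
    qed
    moreover have "p = (\<lambda>i. (1/a) * e i + (-b/a) * q i)"
      unfolding e using False by (simp add: field_simps)
    then have "p \<in> span2 e q" by (simp only: span2_I)
    then have "span2 p q \<subseteq> span2 e q" by (rule span2_subset[OF _ span2_base(2)])
    moreover have "span2 e q \<subseteq> span2 p q" using span2_subset[OF assms(2) span2_base(2)] .
    ultimately show ?thesis using that[of q] subset_antisym by blast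
  next
    case True
    have b: "b \<noteq> 0" using assms(3) True unfolding e by auto
    have "indep2 e p" unfolding indep2_def
    proof (intro allI impI)
      fix s t assume "\<forall>i<4. s * e i + t * p i = 0"
      then have "\<forall>i<4. t * p i + (s*b) * q i = 0" unfolding e True by (simp add: algebra_simps)
      then have "t = 0 \<and> s*b = 0" using indep2D[OF assms(1)] by blast
      then show "s = 0 \<and> t = 0" using b by auto
    qed
    moreover have "q = (\<lambda>i. (1/b) * e i + 0 * p i)" unfolding e True using b by simp
    then have "q \<in> span2 e p" by (simp only: span2_I)
    then have "span2 p q \<subseteq> span2 e p" by (rule span2_subset[OF span2_base(2)])
    moreover have "span2 e p \<subseteq> span2 p q" using span2_subset[OF assms(2) span2_base(1)] .
    ultimately show ?thesis using that[of p] subset_antisym by blast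
  qed
qed

definition indep3 :: "(nat \<Rightarrow> 'a::field) \<Rightarrow> (nat \<Rightarrow> 'a) \<Rightarrow> (nat \<Rightarrow> 'a) \<Rightarrow> bool" where
  "indep3 e u v \<longleftrightarrow>
     (\<forall>a b c. (\<forall>i<4. a * e i + b * u i + c * v i = 0) \<longrightarrow> a = 0 \<and> b = 0 \<and> c = 0)"

lemma indep3D:
  "indep3 e u v \<Longrightarrow> (\<And>i. i < 4 \<Longrightarrow> a * e i + b * u i + c * v i = 0) \<Longrightarrow> a = 0 \<and> b = 0 \<and> c = 0"
  unfolding indep3_def by blast

lemma det4_zero_imp_in_span3:
  fixes e u v w :: "nat \<Rightarrow> 'a::field"
  assumes "indep3 e u v" "det4 (col4 e u v w) = 0"
  obtains a b c where "\<forall>i<4. w i = a * e i + b * u i + c * v i"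
proof -
  obtain g where g: "\<exists>j<4. g j \<noteq> 0" "\<forall>i<4. (\<Sum>j<4. g j * col4 e u v w j i) = 0"
    using assms(2) det4_eq_0_iff by blast
  have rel: "g 0 * e i + g 1 * u i + g 2 * v i = - (g 3 * w i)" if "i < 4" for i
  proof -
    have "g 0 * e i + g 1 * u i + g 2 * v i + g 3 * w i = 0"
      using g(2) that unfolding sum_col4 by simp
    then show ?thesis by (simp add: eq_neg_iff_add_eq_0)
  qed
  have g3: "g 3 \<noteq> 0"
  proof
    assume g3: "g 3 = 0"
    then have "g 0 * e i + g 1 * u i + g 2 * v i = 0" if "i < 4" for i
      using rel[OF that] by simp
    then have "g 0 = 0 \<and> g 1 = 0 \<and> g 2 = 0" by (rule indep3D[OF assms(1)])
    with g3 have "g j = 0" if "j < 4" for j using less_4_cases[OF that] by auto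
    then show False using g(1) by blast
  qed
  have "w i = (- g 0 / g 3) * e i + (- g 1 / g 3) * u i + (- g 2 / g 3) * v i" if "i < 4" for i
  proof -
    have "w i = - (g 0 * e i + g 1 * u i + g 2 * v i) / g 3" using rel[OF that] g3 by simp
    also have "\<dots> = (- g 0 / g 3) * e i + (- g 1 / g 3) * u i + (- g 2 / g 3) * v i"
      using g3 by (simp add: field_simps)
    finally show ?thesis .
  qed
  then show ?thesis using that[of "- g 0 / g 3" "- g 1 / g 3" "- g 2 / g 3"] by blast
qed

text \<open>Otherwise the four unit vectors would lie in the span of three vectors.\<close>

lemma basis_extension:
  fixes e u v :: "nat \<Rightarrow> 'a::field"
  assumes "indep3 e u v"
  obtains w where "det4 (col4 e u v w) \<noteq> 0"
proof (rule ccontr)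
  assume no_w: "\<not> thesis"
  define \<delta> where "\<delta> j = (\<lambda>i::nat. if i = j then 1 else 0 :: 'a)" for j :: nat
  have "\<exists>abc. \<forall>i<4. \<delta> j i = fst abc * e i + fst (snd abc) * u i + snd (snd abc) * v i" for j
  proof -
    have "det4 (col4 e u v (\<delta> j)) = 0" using no_w that by blast
    then obtain a b c where "\<forall>i<4. \<delta> j i = a * e i + b * u i + c * v i"
      by (rule det4_zero_imp_in_span3[OF assms])
    then show ?thesis by (intro exI[of _ "(a, b, c)"]) simp
  qed
  then obtain f where f: "\<And>j. \<forall>i<4. \<delta> j i = fst (f j) * e i + fst (snd (f j)) * u i + snd (snd (f j)) * v i"
    using choice[of "\<lambda>j abc. \<forall>i<4. \<delta> j i = fst abc * e i + fst (snd abc) * u i + snd (snd abc) * v i"]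
    by blast
  define A B C where "A j = fst (f j)" and "B j = fst (snd (f j))" and "C j = snd (snd (f j))" for j
  have unit: "\<delta> j i = A j * e i + B j * u i + C j * v i" if "i < 4" for i j
    using f that unfolding A_def B_def C_def by blast
  define N where "N j = col4 (A j) (B j) (C j) 0" for j
  have "\<forall>i<4. (\<Sum>k<4. \<delta> 3 k * N i k) = 0" unfolding N_def \<delta>_def by (simp add: sum_lessThan_4)
  moreover have "\<exists>k<4. \<delta> 3 k \<noteq> 0" by (intro exI[of _ 3]) (simp add: \<delta>_def)
  ultimately have "det4 (\<lambda>j i. N i j) = 0" using det4_eq_0_iff by blast
  then obtain s where s: "\<exists>k<4. s k \<noteq> 0" "\<forall>i<4. (\<Sum>j<4. s j * N j i) = 0"
    using det4_transpose[of N] det4_eq_0_iff[of N] by auto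
  have "s k = 0" if k: "k < 4" for k
  proof -
    have "s k = (\<Sum>j<4. s j * \<delta> j k)"
      using less_4_cases[OF k] unfolding \<delta>_def by (auto simp: sum_lessThan_4)
    also have "\<dots> = (\<Sum>j<4. s j * (A j * e k + B j * u k + C j * v k))"
      using unit[OF k] by simp
    also have "\<dots> = (\<Sum>j<4. s j * A j) * e k + (\<Sum>j<4. s j * B j) * u k + (\<Sum>j<4. s j * C j) * v k"
      by (simp add: sum_lessThan_4 algebra_simps)
    also have "\<dots> = 0"
      using s(2)[rule_format, of 0] s(2)[rule_format, of 1] s(2)[rule_format, of 2]
      unfolding N_def by simp
    finally show ?thesis .
  qed
  then show False using s(1) by blast
qed

lemma det4_nonzero_indep3:
  assumes "det4 (col4 e u v w) \<noteq> 0"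
  shows "indep3 e u v"
  unfolding indep3_def
proof (intro allI impI)
  fix a b c assume "\<forall>i<4. a * e i + b * u i + c * v i = 0"
  then show "a = 0 \<and> b = 0 \<and> c = 0" using det4_nonzero_independent[OF assms, of a b c 0] by simp
qed

section \<open>Rational lines and their complex points\<close>

definition of_rat_vec :: "(nat \<Rightarrow> rat) \<Rightarrow> nat \<Rightarrow> complex" where
  "of_rat_vec p = (\<lambda>i. of_rat (p i))"

definition C4 :: "(nat \<Rightarrow> complex) set" where
  "C4 = {v. \<forall>i\<ge>4. v i = 0}"

lemma of_rat_vec_C4: "p \<in> Q4 \<Longrightarrow> of_rat_vec p \<in> C4"
  unfolding Q4_def C4_def of_rat_vec_def by simp

lemma span2_Q4: "p \<in> Q4 \<Longrightarrow> q \<in> Q4 \<Longrightarrow> x \<in> span2 p q \<Longrightarrow> x \<in> Q4"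
  by (auto simp: Q4_def span2_def)

lemma span2_C4: "p \<in> C4 \<Longrightarrow> q \<in> C4 \<Longrightarrow> x \<in> span2 p q \<Longrightarrow> x \<in> C4"
  by (auto simp: C4_def span2_def)

lemma qline_iff: "qline L \<longleftrightarrow> (\<exists>p q. p \<in> Q4 \<and> q \<in> Q4 \<and> indep2 p q \<and> L = span2 p q)"
proof -
  have "(\<forall>s t. (\<lambda>i. s * p i + t * q i) = (\<lambda>i. 0) \<longrightarrow> s = 0 \<and> t = 0) \<longleftrightarrow> indep2 p q"
    if "p \<in> Q4" "q \<in> Q4" for p q :: "nat \<Rightarrow> rat"
  proof -
    have "(\<lambda>i. s * p i + t * q i) = (\<lambda>i. 0) \<longleftrightarrow> (\<forall>i<4. s * p i + t * q i = 0)" for s t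
    proof
      assume lower: "\<forall>i<4. s * p i + t * q i = 0"
      show "(\<lambda>i. s * p i + t * q i) = (\<lambda>i. 0)"
      proof
        fix i show "s * p i + t * q i = 0"
          using lower that by (cases "i < 4") (auto simp: Q4_def)
      qed
    qed (simp add: fun_eq_iff)
    then show ?thesis unfolding indep2_def by simp
  qed
  then show ?thesis unfolding qline_def span2_def by (auto cong: conj_cong)
qed

lemma of_rat_vec_span2: "x \<in> span2 p q \<Longrightarrow> of_rat_vec x \<in> span2 (of_rat_vec p) (of_rat_vec q)"
proof -
  assume "x \<in> span2 p q"
  then obtain s t where x: "x = (\<lambda>i. s * p i + t * q i)" by (rule span2_E)
  have "of_rat_vec x = (\<lambda>i. of_rat s * of_rat_vec p i + of_rat t * of_rat_vec q i)"
    unfolding x of_rat_vec_def by (simp add: of_rat_add of_rat_mult)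
  then show ?thesis by (simp only: span2_I)
qed

lemma cspan_span2: "cspan (span2 p q) = span2 (of_rat_vec p) (of_rat_vec q)"
proof (rule subset_antisym)
  show "cspan (span2 p q) \<subseteq> span2 (of_rat_vec p) (of_rat_vec q)"
  proof
    fix w assume "w \<in> cspan (span2 p q)"
    then obtain s t p1 q1 where w: "w = (\<lambda>i. s * of_rat (p1 i) + t * of_rat (q1 i))"
      and "p1 \<in> span2 p q" "q1 \<in> span2 p q" unfolding cspan_def by blast
    then have "of_rat_vec p1 \<in> span2 (of_rat_vec p) (of_rat_vec q)"
      "of_rat_vec q1 \<in> span2 (of_rat_vec p) (of_rat_vec q)" by (simp_all add: of_rat_vec_span2)
    from span2_closed[OF this] show "w \<in> span2 (of_rat_vec p) (of_rat_vec q)"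
      unfolding w of_rat_vec_def by simp
  qed
  show "span2 (of_rat_vec p) (of_rat_vec q) \<subseteq> cspan (span2 p q)"
  proof
    fix w assume "w \<in> span2 (of_rat_vec p) (of_rat_vec q)"
    then obtain s t where "w = (\<lambda>i. s * of_rat (p i) + t * of_rat (q i))"
      unfolding of_rat_vec_def by (rule span2_E)
    then show "w \<in> cspan (span2 p q)" unfolding cspan_def using span2_base by blast
  qed
qed

lemma indep2_of_rat_vec:
  assumes "indep2 p q"
  shows "indep2 (of_rat_vec p) (of_rat_vec q)"
proof -
  obtain i j where ij: "i < 4" "j < 4" "p i * q j - p j * q i \<noteq> 0"
    using indep2_nonzero_minor[OF assms] by blast
  let ?P = "of_rat_vec p" and ?Q = "of_rat_vec q"
  have D: "?P i * ?Q j - ?P j * ?Q i \<noteq> 0"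
    using ij(3) unfolding of_rat_vec_def by (metis of_rat_diff of_rat_eq_0_iff of_rat_mult)
  show ?thesis unfolding indep2_def
  proof (intro allI impI)
    fix s t assume h: "\<forall>i<4. s * ?P i + t * ?Q i = 0"
    then have e: "s * ?P i + t * ?Q i = 0" "s * ?P j + t * ?Q j = 0" using ij by auto
    have "s * (?P i * ?Q j - ?P j * ?Q i) = ?Q j * (s * ?P i + t * ?Q i) - ?Q i * (s * ?P j + t * ?Q j)"
      "t * (?P i * ?Q j - ?P j * ?Q i) = ?P i * (s * ?P j + t * ?Q j) - ?P j * (s * ?P i + t * ?Q i)"
      by (simp_all add: algebra_simps)
    then show "s = 0 \<and> t = 0" using e D by simp
  qed
qed

text \<open>Cramer's rule on a nonzero \<open>2 \<times> 2\<close> minor.\<close>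

lemma span2_rational_coeffs:
  assumes "indep2 p q"
    and y: "\<forall>i<4. y i = s * of_rat_vec p i + t * of_rat_vec q i" "\<forall>i<4. y i \<in> \<rat>"
  shows "s \<in> \<rat> \<and> t \<in> \<rat>"
proof -
  obtain i j where ij: "i < 4" "j < 4" "p i * q j - p j * q i \<noteq> 0"
    using indep2_nonzero_minor[OF assms(1)] by blast
  let ?P = "of_rat_vec p" and ?Q = "of_rat_vec q"
  let ?D = "?P i * ?Q j - ?P j * ?Q i"
  have Dq: "?D = of_rat (p i * q j - p j * q i)"
    unfolding of_rat_vec_def by (simp add: of_rat_diff of_rat_mult)
  then have D: "?D \<noteq> 0" using ij(3) by simp
  have yi: "y i = s * ?P i + t * ?Q i" and yj: "y j = s * ?P j + t * ?Q j" using y(1) ij by auto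
  have "s * ?D = ?Q j * y i - ?Q i * y j" unfolding yi yj by (simp add: algebra_simps)
  then have s: "s = (?Q j * y i - ?Q i * y j) / ?D" using D by (simp add: eq_divide_eq)
  have "t * ?D = ?P i * y j - ?P j * y i" unfolding yi yj by (simp add: algebra_simps)
  then have t: "t = (?P i * y j - ?P j * y i) / ?D" using D by (simp add: eq_divide_eq)
  have "?P k \<in> \<rat>" "?Q k \<in> \<rat>" for k unfolding of_rat_vec_def by auto
  moreover have "y i \<in> \<rat>" "y j \<in> \<rat>" "?D \<in> \<rat>" using y(2) ij Dq by auto
  ultimately show ?thesis unfolding s t by (intro conjI Rats_divide Rats_diff Rats_mult; simp)
qed

lemma of_rat_vec_in_span2_iff:
  assumes "indep2 p q"
  shows "of_rat_vec x \<in> span2 (of_rat_vec p) (of_rat_vec q) \<longleftrightarrow> x \<in> span2 p q"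
proof
  assume "of_rat_vec x \<in> span2 (of_rat_vec p) (of_rat_vec q)"
  then obtain s t where h: "of_rat_vec x = (\<lambda>i. s * of_rat_vec p i + t * of_rat_vec q i)"
    by (rule span2_E)
  have "\<forall>i<4. of_rat_vec x i = s * of_rat_vec p i + t * of_rat_vec q i" using h by simp
  moreover have "\<forall>i<4. of_rat_vec x i \<in> \<rat>" unfolding of_rat_vec_def by auto
  ultimately have "s \<in> \<rat> \<and> t \<in> \<rat>" by (rule span2_rational_coeffs[OF assms])
  then obtain s' t' where st: "s = of_rat s'" "t = of_rat t'" by (auto elim!: Rats_cases)
  have "x = (\<lambda>i. s' * p i + t' * q i)"
  proof
    fix i
    have "of_rat (x i) = (of_rat (s' * p i + t' * q i) :: complex)"
      using fun_cong[OF h, of i] unfolding st of_rat_vec_def by (simp add: of_rat_add of_rat_mult)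
    then show "x i = s' * p i + t' * q i" by simp
  qed
  then show "x \<in> span2 p q" by (simp only: span2_I)
qed (rule of_rat_vec_span2)

lemma qline_obtain:
  assumes "qline L"
  obtains p q where "p \<in> Q4" "q \<in> Q4" "indep2 p q" "L = span2 p q"
    "cspan L = span2 (of_rat_vec p) (of_rat_vec q)"
  using assms qline_iff cspan_span2 by metis

lemma cspan_C4: "qline L \<Longrightarrow> cspan L \<subseteq> C4"
  by (metis qline_obtain span2_C4 of_rat_vec_C4 subsetI)

lemma cspan_closed:
  "qline L \<Longrightarrow> x \<in> cspan L \<Longrightarrow> y \<in> cspan L \<Longrightarrow> (\<lambda>i. s * x i + t * y i) \<in> cspan L"
  by (metis qline_obtain span2_closed)

lemma cspan_subset_imp_eq:
  assumes "qline L" "qline L'" "cspan L \<subseteq> cspan L'"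
  shows "L = L'"
proof -
  obtain p q where pq: "indep2 p q" "L = span2 p q" "cspan L = span2 (of_rat_vec p) (of_rat_vec q)"
    using assms(1) by (rule qline_obtain)
  obtain p' q' where pq': "indep2 p' q'" "L' = span2 p' q'"
    "cspan L' = span2 (of_rat_vec p') (of_rat_vec q')"
    using assms(2) by (rule qline_obtain)
  have "span2 p q \<subseteq> span2 p' q'"
  proof
    fix x assume "x \<in> span2 p q"
    then have "of_rat_vec x \<in> cspan L'" using assms(3) pq(3) of_rat_vec_span2 by blast
    then show "x \<in> span2 p' q'" using of_rat_vec_in_span2_iff[OF pq'(1)] pq'(3) by simp
  qed
  then show ?thesis using span2_eq_if_subset[OF pq(1)] pq(2) pq'(2) by simp
qed

section \<open>Two meeting rational lines\<close>

lemma det4_zero_if_spans_meet: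
  assumes z: "z \<in> span2 (of_rat_vec p1) (of_rat_vec q1)" "z \<in> span2 (of_rat_vec p2) (of_rat_vec q2)"
      "z \<noteq> (\<lambda>i. 0)"
  shows "det4 (col4 p1 q1 p2 q2) = 0"
proof -
  obtain s1 t1 where z1: "z = (\<lambda>i. s1 * of_rat_vec p1 i + t1 * of_rat_vec q1 i)"
    using z(1) by (rule span2_E)
  obtain s2 t2 where z2: "z = (\<lambda>i. s2 * of_rat_vec p2 i + t2 * of_rat_vec q2 i)"
    using z(2) by (rule span2_E)
  have st1: "s1 \<noteq> 0 \<or> t1 \<noteq> 0" using z(3) z1 by auto
  have "\<forall>i<4. (\<Sum>j<4. col4 s1 t1 (-s2) (-t2) j * of_rat (col4 p1 q1 p2 q2 j i)) = 0"
  proof (intro allI impI)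
    fix i :: nat
    have "s1 * of_rat_vec p1 i + t1 * of_rat_vec q1 i = s2 * of_rat_vec p2 i + t2 * of_rat_vec q2 i"
      using fun_cong[OF z1, of i] fun_cong[OF z2, of i] by simp
    then show "(\<Sum>j<4. col4 s1 t1 (-s2) (-t2) j * of_rat (col4 p1 q1 p2 q2 j i)) = 0"
      unfolding sum_lessThan_4 of_rat_vec_def by simp
  qed
  moreover have "\<exists>j<4. col4 s1 t1 (-s2) (-t2) j \<noteq> 0"
  proof (cases "s1 = 0")
    case False
    then show ?thesis by (intro exI[of _ 0]) simp
  next
    case True
    then show ?thesis using st1 by (intro exI[of _ 1]) simp
  qed
  ultimately have "det4 (\<lambda>j i. of_rat (col4 p1 q1 p2 q2 j i) :: complex) = 0"
    using det4_eq_0_iff by blast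
  then show ?thesis using det4_of_rat[of "col4 p1 q1 p2 q2", where 'a=complex] by simp
qed

text \<open>The vectors \<open>p\<^sub>1, q\<^sub>1, p\<^sub>2, q\<^sub>2\<close> are dependent over \<open>\<complex>\<close>; their determinant is
  rational, so they are dependent over \<open>\<rat>\<close> as well.\<close>

lemma rational_common_point:
  assumes pq1: "p1 \<in> Q4" "q1 \<in> Q4" "indep2 p1 q1" and pq2: "p2 \<in> Q4" "q2 \<in> Q4" "indep2 p2 q2"
    and z: "z \<in> span2 (of_rat_vec p1) (of_rat_vec q1)" "z \<in> span2 (of_rat_vec p2) (of_rat_vec q2)"
      "z \<noteq> (\<lambda>i. 0)"
  obtains e where "e \<in> span2 p1 q1" "e \<in> span2 p2 q2" "e \<noteq> (\<lambda>i. 0)"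
proof -
  obtain g where g: "\<exists>j<4. g j \<noteq> 0" "\<forall>i<4. (\<Sum>j<4. g j * col4 p1 q1 p2 q2 j i) = 0"
    using det4_zero_if_spans_meet[OF z] det4_eq_0_iff by blast
  define e where "e = (\<lambda>i. g 0 * p1 i + g 1 * q1 i)"
  have e2: "e = (\<lambda>i. (- g 2) * p2 i + (- g 3) * q2 i)"
  proof
    fix i :: nat
    show "e i = (- g 2) * p2 i + (- g 3) * q2 i"
    proof (cases "i < 4")
      case True
      then have "g 0 * p1 i + g 1 * q1 i + g 2 * p2 i + g 3 * q2 i = 0"
        using g(2) unfolding sum_col4 by simp
      then show ?thesis unfolding e_def by linarith
    next
      case False
      then show ?thesis using pq1 pq2 unfolding e_def Q4_def by simp
    qed
  qed
  have "e \<noteq> (\<lambda>i. 0)"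
  proof
    assume e0: "e = (\<lambda>i. 0)"
    have "g 0 * p1 i + g 1 * q1 i = 0" "(- g 2) * p2 i + (- g 3) * q2 i = 0" for i
      using fun_cong[OF e0, of i] fun_cong[OF e2, of i] unfolding e_def by simp_all
    then have "g 0 = 0 \<and> g 1 = 0" "- g 2 = 0 \<and> - g 3 = 0"
      using indep2D[OF pq1(3)] indep2D[OF pq2(3)] by blast+
    moreover obtain j where "j < 4" "g j \<noteq> 0" using g(1) by blast
    ultimately show False using less_4_cases by auto
  qed
  moreover have "e \<in> span2 p1 q1" unfolding e_def by (rule span2_I)
  moreover have "e \<in> span2 p2 q2" unfolding e2 by (rule span2_I)
  ultimately show ?thesis using that by blast
qed

lemma det4_of_rat_vec:
  "det4 (col4 (of_rat_vec e) (of_rat_vec u) (of_rat_vec v) (of_rat_vec w))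
     = of_rat (det4 (col4 e u v w))"
proof -
  have "col4 (of_rat_vec e) (of_rat_vec u) (of_rat_vec v) (of_rat_vec w)
      = (\<lambda>j i. of_rat (col4 e u v w j i))"
    by (auto simp: col4_def of_rat_vec_def fun_eq_iff)
  then show ?thesis using det4_of_rat by metis
qed

lemma indep3_if_distinct_spans:
  assumes Q: "e \<in> Q4" "u \<in> Q4" "v \<in> Q4" and "indep2 e u" "indep2 e v" "span2 e u \<noteq> span2 e v"
  shows "indep3 e u v"
  unfolding indep3_def
proof (intro allI impI)
  fix a b c assume h: "\<forall>i<4. a * e i + b * u i + c * v i = 0"
  show "a = 0 \<and> b = 0 \<and> c = 0"
  proof (cases "c = 0")
    case True
    then show ?thesis using indep2D[OF assms(4), of a b] h by simp
  next
    case False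
    have "v = (\<lambda>i. (- a / c) * e i + (- b / c) * u i)"
    proof
      fix i :: nat
      show "v i = (- a / c) * e i + (- b / c) * u i"
      proof (cases "i < 4")
        case True
        then have "c * v i = - (a * e i + b * u i)"
          using h by (simp add: eq_neg_iff_add_eq_0 algebra_simps)
        then show ?thesis using False by (simp add: field_simps)
      next
        case False
        then show ?thesis using Q unfolding Q4_def by simp
      qed
    qed
    then have "v \<in> span2 e u" by (simp only: span2_I)
    then have "span2 e v \<subseteq> span2 e u" by (rule span2_subset[OF span2_base(1)])
    then have "span2 e v = span2 e u" by (rule span2_eq_if_subset[OF assms(5)])
    then show ?thesis using assms(6) by simp
  qed
qed

lemma meeting_qlines_frame:
  assumes "qline L1" "qline L2" "L1 \<noteq> L2" "\<not> lines_disjoint L1 L2"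
  obtains e u v w where "e \<in> Q4" "u \<in> Q4" "v \<in> Q4" "L1 = span2 e u" "L2 = span2 e v"
    "det4 (col4 e u v w) \<noteq> 0"
proof -
  obtain p1 q1 where P1: "p1 \<in> Q4" "q1 \<in> Q4" "indep2 p1 q1" "L1 = span2 p1 q1"
    "cspan L1 = span2 (of_rat_vec p1) (of_rat_vec q1)"
    using assms(1) by (rule qline_obtain)
  obtain p2 q2 where P2: "p2 \<in> Q4" "q2 \<in> Q4" "indep2 p2 q2" "L2 = span2 p2 q2"
    "cspan L2 = span2 (of_rat_vec p2) (of_rat_vec q2)"
    using assms(2) by (rule qline_obtain)
  obtain z where "z \<in> cspan L1" "z \<in> cspan L2" "z \<noteq> (\<lambda>i. 0)"
    using assms(4) unfolding lines_disjoint_def by blast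
  then obtain e where e: "e \<in> span2 p1 q1" "e \<in> span2 p2 q2" "e \<noteq> (\<lambda>i. 0)"
    using rational_common_point[OF P1(1-3) P2(1-3)] P1(5) P2(5) by blast
  obtain u where u: "u \<in> {p1, q1}" "indep2 e u" "span2 p1 q1 = span2 e u"
    using span2_rebase[OF P1(3) e(1,3)] .
  obtain v where v: "v \<in> {p2, q2}" "indep2 e v" "span2 p2 q2 = span2 e v"
    using span2_rebase[OF P2(3) e(2,3)] .
  have Q: "e \<in> Q4" "u \<in> Q4" "v \<in> Q4" using span2_Q4[OF P1(1,2) e(1)] u(1) v(1) P1 P2 by auto
  have L: "L1 = span2 e u" "L2 = span2 e v" using P1(4) u(3) P2(4) v(3) by simp_all
  have "indep3 e u v" using indep3_if_distinct_spans[OF Q u(2) v(2)] L assms(3) by simp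
  then obtain w where "det4 (col4 e u v w) \<noteq> 0" by (rule basis_extension)
  then show ?thesis using that Q L by blast
qed

section \<open>Lines on a cubic surface\<close>

lemma binary_cubic_coeffs_zero:
  fixes T0 T1 T2 T3 :: "'a::field_char_0"
  assumes "\<And>a b. a^3 * T0 + 3*a^2*b * T1 + 3*a*b^2 * T2 + b^3 * T3 = 0"
  shows "T0 = 0 \<and> T1 = 0 \<and> T2 = 0 \<and> T3 = 0"
proof -
  have "T0 = 0" "T3 = 0" using assms[of 1 0] assms[of 0 1] by simp_all
  moreover have "T0 + 3*T1 + 3*T2 + T3 = 0" "T0 - 3*T1 + 3*T2 - T3 = 0"
    using assms[of 1 1] assms[of 1 "-1"] by (simp_all add: power3_eq_cube)
  ultimately show ?thesis by (simp add: algebra_simps)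
qed

lemma cubic_polar_vanish_on_line:
  assumes "\<forall>x\<in>span2 X Y. cubic_eval F x = 0"
  shows "cubic_polar F X X X = 0 \<and> cubic_polar F X X Y = 0 \<and> cubic_polar F X Y Y = 0
    \<and> cubic_polar F Y Y Y = 0"
proof (rule binary_cubic_coeffs_zero)
  fix a b
  have "cubic_eval F (\<lambda>i. a * X i + b * Y i) = 0" using assms span2_I by blast
  then show "a^3 * cubic_polar F X X X + 3*a^2*b * cubic_polar F X X Y
      + 3*a*b^2 * cubic_polar F X Y Y + b^3 * cubic_polar F Y Y Y = 0"
    unfolding cubic_eval_eq_polar cubic_polar_cube_binomial .
qed

lemma binary_quadratic_has_zero:
  "\<exists>a b::complex. (a \<noteq> 0 \<or> b \<noteq> 0) \<and> a^2 * A + 2*a*b * B + b^2 * C = 0"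
proof (cases "A = 0")
  case True
  then show ?thesis by (intro exI[of _ 1] exI[of _ 0]) simp
next
  case False
  define r where "r = csqrt (B^2 - A*C)"
  define a where "a = (r - B) / A"
  have "a^2 * A + 2*a*1 * B + 1^2 * C = (r^2 - B^2 + A*C) / A"
    unfolding a_def using False by (simp add: field_simps power2_eq_square)
  also have "\<dots> = 0" unfolding r_def by simp
  finally show ?thesis by (intro exI[of _ a] exI[of _ 1]) simp
qed

definition spans4 :: "(nat \<Rightarrow> 'a::field) \<Rightarrow> (nat \<Rightarrow> 'a) \<Rightarrow> (nat \<Rightarrow> 'a) \<Rightarrow> (nat \<Rightarrow> 'a) \<Rightarrow> bool" where
  "spans4 E U V W \<longleftrightarrow> (\<forall>y. \<exists>a b c d. \<forall>i<4. y i = a * E i + b * U i + c * V i + d * W i)"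

lemma det4_nonzero_spans4:
  assumes "det4 (col4 E U V W) \<noteq> 0"
  shows "spans4 E U V W"
  unfolding spans4_def
proof
  fix y
  obtain a b c d where "\<forall>i<4. y i = a * E i + b * U i + c * V i + d * W i"
    by (rule det4_nonzero_spanning[OF assms])
  then show "\<exists>a b c d. \<forall>i<4. y i = a * E i + b * U i + c * V i + d * W i" by blast
qed

lemma spans4_swap23:
  assumes "spans4 E U V W"
  shows "spans4 E V U W"
  unfolding spans4_def
proof
  fix y
  obtain a b c d where "\<forall>i<4. y i = a * E i + b * U i + c * V i + d * W i"
    using assms unfolding spans4_def by blast
  then have "\<forall>i<4. y i = a * E i + c * V i + b * U i + d * W i" by (simp add: algebra_simps)
  then show "\<exists>a b c d. \<forall>i<4. y i = a * E i + b * V i + c * U i + d * W i" by blast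
qed

lemma det4_nonzero_indep2:
  assumes "det4 (col4 E U V W) \<noteq> 0"
  shows "indep2 E U" "indep2 E V"
proof -
  show "indep2 E U" unfolding indep2_def
  proof (intro allI impI)
    fix s t assume "\<forall>i<4. s * E i + t * U i = 0"
    then show "s = 0 \<and> t = 0" using det4_nonzero_independent[OF assms, of s t 0 0] by simp
  qed
  show "indep2 E V" unfolding indep2_def
  proof (intro allI impI)
    fix s t assume "\<forall>i<4. s * E i + t * V i = 0"
    then show "s = 0 \<and> t = 0" using det4_nonzero_independent[OF assms, of s 0 t 0] by simp
  qed
qed

text \<open>If the polar of the line \<open>EU\<close> vanishes in the direction \<open>V\<close>, the tangent plane along
  the line is constant. A zero \<open>x\<close> on the line of the binary quadratic form
  \<open>cubic_polar F x x W\<close> then has \<open>cubic_polar F x x\<close> vanishing on the whole frame, so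
  \<open>x\<close> is a singular point.\<close>

lemma singular_point_on_line:
  fixes E U V W :: "nat \<Rightarrow> complex"
  assumes "spans4 E U V W" "indep2 E U"
    and line: "\<forall>x\<in>span2 E U. cubic_eval F x = 0"
    and tangent: "cubic_polar F E E V = 0" "cubic_polar F E U V = 0" "cubic_polar F U U V = 0"
  shows "\<not> smooth_cubic F"
proof -
  note t = cubic_polar_vanish_on_line[OF line]
  obtain a b where ab: "a \<noteq> 0 \<or> b \<noteq> 0"
    "a^2 * cubic_polar F E E W + 2*a*b * cubic_polar F E U W + b^2 * cubic_polar F U U W = 0"
    using binary_quadratic_has_zero by blast
  define x where "x = (\<lambda>i. a * E i + b * U i)"
  have "\<exists>i<4. x i \<noteq> 0"
    using indep2D[OF assms(2), of a b] ab(1) unfolding x_def by blast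
  moreover have "cubic_eval F x = 0" using line unfolding x_def by (simp add: span2_I)
  moreover have "cubic_partial F j x = 0" if j: "j < 4" for j
  proof -
    have polar: "cubic_polar F x x Y =
        a^2 * cubic_polar F E E Y + 2*a*b * cubic_polar F E U Y + b^2 * cubic_polar F U U Y" for Y
      unfolding x_def by (rule cubic_polar_square_binomial)
    have "cubic_polar F E U E = cubic_polar F E E U" "cubic_polar F U U E = cubic_polar F E U U"
      using cubic_polar_commute23[of F E U E] cubic_polar_commute23[of F U U E]
        cubic_polar_commute12[of F U E U] by simp_all
    then have xE: "cubic_polar F x x E = 0" and xU: "cubic_polar F x x U = 0"
      and xV: "cubic_polar F x x V = 0" and xW: "cubic_polar F x x W = 0"
      unfolding polar using t tangent ab(2) by simp_all
    obtain a' b' c' d' where unit: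
      "\<forall>i<4. (if i = j then 1 else 0) = a' * E i + b' * U i + c' * V i + d' * W i"
      using assms(1)[unfolded spans4_def, rule_format, of "\<lambda>i. if i = j then 1 else 0"] by blast
    have "cubic_polar F x x (\<lambda>i. if i = j then 1 else 0)
        = cubic_polar F x x (\<lambda>i. a' * E i + b' * U i + c' * V i + d' * W i)"
      by (rule cubic_polar_cong3) (simp add: unit)
    also have "\<dots> = 0"
      by (simp add: cubic_polar_add3 cubic_polar_scale3 xE xU xV xW)
    finally show ?thesis unfolding cubic_partial_eq_polar[OF j] by simp
  qed
  ultimately show ?thesis unfolding smooth_cubic_def by blast
qed

text \<open>The cubic vanishes on the lines \<open>\<beta> = 0\<close> and \<open>\<gamma> = 0\<close> of the plane, so the coefficients of
  \<open>\<alpha>\<^sup>3, \<alpha>\<^sup>2\<beta>, \<alpha>\<beta>\<^sup>2, \<beta>\<^sup>3\<close> and of \<open>\<alpha>\<^sup>3, \<alpha>\<^sup>2\<gamma>, \<alpha>\<gamma>\<^sup>2, \<gamma>\<^sup>3\<close> vanish and \<open>\<beta> \<gamma>\<close> divides it.\<close>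

lemma cubic_eval_plane_factor:
  fixes E U V :: "nat \<Rightarrow> complex"
  assumes "\<forall>x\<in>span2 E U. cubic_eval F x = 0" "\<forall>x\<in>span2 E V. cubic_eval F x = 0"
  shows "cubic_eval F (\<lambda>i. \<alpha> * E i + \<beta> * U i + \<gamma> * V i) = \<beta> * \<gamma> *
    (6 * cubic_polar F E U V * \<alpha> + 3 * cubic_polar F U U V * \<beta> + 3 * cubic_polar F U V V * \<gamma>)"
  using cubic_polar_vanish_on_line[OF assms(1)] cubic_polar_vanish_on_line[OF assms(2)]
  unfolding cubic_eval_eq_polar cubic_polar_cube_trinomial
  by (simp add: algebra_simps power2_eq_square power3_eq_cube)

lemma residual_factor_nondegenerate:
  fixes E U V W :: "nat \<Rightarrow> complex"
  assumes "smooth_cubic F" "det4 (col4 E U V W) \<noteq> 0"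
    and EU: "\<forall>x\<in>span2 E U. cubic_eval F x = 0" and EV: "\<forall>x\<in>span2 E V. cubic_eval F x = 0"
  shows "cubic_polar F E U V \<noteq> 0 \<or> (cubic_polar F U U V \<noteq> 0 \<and> cubic_polar F U V V \<noteq> 0)"
proof (rule ccontr)
  assume "\<not> ?thesis"
  then have EUV: "cubic_polar F E U V = 0"
    and cases: "cubic_polar F U U V = 0 \<or> cubic_polar F U V V = 0" by auto
  note spans = det4_nonzero_spans4[OF assms(2)] and indep = det4_nonzero_indep2[OF assms(2)]
  note tU = cubic_polar_vanish_on_line[OF EU] and tV = cubic_polar_vanish_on_line[OF EV]
  from cases show False
  proof
    assume "cubic_polar F U U V = 0"
    with EUV tV have "\<not> smooth_cubic F"
      using singular_point_on_line[OF spans indep(1) EU] by simp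
    then show False using assms(1) by simp
  next
    assume UVV: "cubic_polar F U V V = 0"
    have "cubic_polar F E V U = cubic_polar F E U V" "cubic_polar F V V U = cubic_polar F U V V"
      using cubic_polar_commute23[of F E V U] cubic_polar_commute23[of F V V U]
        cubic_polar_commute12[of F V U V] by simp_all
    with EUV UVV tU have "\<not> smooth_cubic F"
      using singular_point_on_line[OF spans4_swap23[OF spans] indep(2) EV] by simp
    then show False using assms(1) by simp
  qed
qed

section \<open>The plane through two meeting lines\<close>

definition span3 :: "(nat \<Rightarrow> 'a::field) \<Rightarrow> (nat \<Rightarrow> 'a) \<Rightarrow> (nat \<Rightarrow> 'a) \<Rightarrow> (nat \<Rightarrow> 'a) set" where
  "span3 E U V = {(\<lambda>i. \<alpha> * E i + \<beta> * U i + \<gamma> * V i) | \<alpha> \<beta> \<gamma>. True}"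

lemma span3I: "(\<lambda>i. \<alpha> * E i + \<beta> * U i + \<gamma> * V i) \<in> span3 E U V"
  unfolding span3_def by blast

definition plane_span :: "(nat \<Rightarrow> rat) set \<Rightarrow> (nat \<Rightarrow> rat) set \<Rightarrow> (nat \<Rightarrow> complex) set" where
  "plane_span L1 L2 = {(\<lambda>i. a i + b i) | a b. a \<in> cspan L1 \<and> b \<in> cspan L2}"

lemma plane_spanI: "a \<in> cspan L1 \<Longrightarrow> b \<in> cspan L2 \<Longrightarrow> (\<lambda>i. a i + b i) \<in> plane_span L1 L2"
  unfolding plane_span_def by blast

lemma plane_span_eq_span3:
  assumes "cspan L1 = span2 E U" "cspan L2 = span2 E V"
  shows "plane_span L1 L2 = span3 E U V"
proof (rule subset_antisym)
  show "plane_span L1 L2 \<subseteq> span3 E U V"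
  proof
    fix x assume "x \<in> plane_span L1 L2"
    then obtain a b where x: "x = (\<lambda>i. a i + b i)" "a \<in> span2 E U" "b \<in> span2 E V"
      unfolding plane_span_def assms by blast
    obtain s t where a: "a = (\<lambda>i. s * E i + t * U i)" using x(2) by (rule span2_E)
    obtain s' t' where b: "b = (\<lambda>i. s' * E i + t' * V i)" using x(3) by (rule span2_E)
    have "x = (\<lambda>i. (s + s') * E i + t * U i + t' * V i)"
      unfolding x(1) a b by (simp add: algebra_simps)
    then show "x \<in> span3 E U V" by (simp only: span3I)
  qed
  show "span3 E U V \<subseteq> plane_span L1 L2"
  proof
    fix x assume "x \<in> span3 E U V"
    then obtain \<alpha> \<beta> \<gamma> where "x = (\<lambda>i. \<alpha> * E i + \<beta> * U i + \<gamma> * V i)"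
      unfolding span3_def by blast
    moreover have "(\<lambda>i. \<alpha> * E i + \<beta> * U i) \<in> cspan L1" "(\<lambda>i. 0 * E i + \<gamma> * V i) \<in> cspan L2"
      unfolding assms by (rule span2_I)+
    ultimately show "x \<in> plane_span L1 L2" using plane_spanI by fastforce
  qed
qed

lemma span3_zero_set_of_factor:
  assumes "\<And>\<alpha> \<beta> \<gamma>. cubic_eval F (\<lambda>i. \<alpha> * E i + \<beta> * U i + \<gamma> * V i) = \<beta> * \<gamma> * (k1 * \<alpha> + k2 * \<beta> + k3 * \<gamma>)"
  shows "{x \<in> span3 E U V. cubic_eval F x = 0} = span2 E U \<union> span2 E V
    \<union> {\<lambda>i. \<alpha> * E i + \<beta> * U i + \<gamma> * V i | \<alpha> \<beta> \<gamma>. k1 * \<alpha> + k2 * \<beta> + k3 * \<gamma> = 0}"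
    (is "_ = _ \<union> _ \<union> ?M")
proof (rule subset_antisym)
  show "{x \<in> span3 E U V. cubic_eval F x = 0} \<subseteq> span2 E U \<union> span2 E V \<union> ?M"
  proof
    fix x assume "x \<in> {x \<in> span3 E U V. cubic_eval F x = 0}"
    then obtain \<alpha> \<beta> \<gamma> where x: "x = (\<lambda>i. \<alpha> * E i + \<beta> * U i + \<gamma> * V i)"
      and "\<beta> * \<gamma> * (k1 * \<alpha> + k2 * \<beta> + k3 * \<gamma>) = 0"
      unfolding span3_def using assms by auto
    then consider "\<gamma> = 0" | "\<beta> = 0" | "k1 * \<alpha> + k2 * \<beta> + k3 * \<gamma> = 0" by auto
    then show "x \<in> span2 E U \<union> span2 E V \<union> ?M"
    proof cases
      case 1
      then have "x = (\<lambda>i. \<alpha> * E i + \<beta> * U i)" using x by simp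
      then show ?thesis by (simp add: span2_I)
    next
      case 2
      then have "x = (\<lambda>i. \<alpha> * E i + \<gamma> * V i)" using x by simp
      then show ?thesis by (simp add: span2_I)
    next
      case 3
      then show ?thesis using x by blast
    qed
  qed
  have zero: "(\<lambda>i. \<alpha> * E i + \<beta> * U i + \<gamma> * V i) \<in> {x \<in> span3 E U V. cubic_eval F x = 0}"
    if "\<beta> = 0 \<or> \<gamma> = 0 \<or> k1 * \<alpha> + k2 * \<beta> + k3 * \<gamma> = 0" for \<alpha> \<beta> \<gamma>
    using that span3I[of \<alpha> E \<beta> U \<gamma> V] assms by auto
  show "span2 E U \<union> span2 E V \<union> ?M \<subseteq> {x \<in> span3 E U V. cubic_eval F x = 0}"
  proof (intro Un_least subsetI)
    fix x assume "x \<in> span2 E U"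
    then obtain s t where "x = (\<lambda>i. s * E i + t * U i)" by (rule span2_E)
    then show "x \<in> {x \<in> span3 E U V. cubic_eval F x = 0}" using zero[where \<alpha> = s and \<beta> = t and \<gamma> = 0] by simp
  next
    fix x assume "x \<in> span2 E V"
    then obtain s t where "x = (\<lambda>i. s * E i + t * V i)" by (rule span2_E)
    then show "x \<in> {x \<in> span3 E U V. cubic_eval F x = 0}" using zero[where \<alpha> = s and \<beta> = 0 and \<gamma> = t] by simp
  next
    fix x assume "x \<in> ?M"
    then show "x \<in> {x \<in> span3 E U V. cubic_eval F x = 0}" using zero by blast
  qed
qed

lemma residual_line_distinct:
  fixes E U V W :: "nat \<Rightarrow> complex"
  assumes det: "det4 (col4 E U V W) \<noteq> 0" and nd: "k1 \<noteq> 0 \<or> (k2 \<noteq> 0 \<and> k3 \<noteq> 0)"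
  defines "M \<equiv> {\<lambda>i. \<alpha> * E i + \<beta> * U i + \<gamma> * V i | \<alpha> \<beta> \<gamma>. k1 * \<alpha> + k2 * \<beta> + k3 * \<gamma> = 0}"
  shows "M \<noteq> span2 E U" "M \<noteq> span2 E V"
proof -
  have coeffU: "\<gamma> = 0" if mem: "(\<lambda>i. \<alpha> * E i + \<beta> * U i + \<gamma> * V i) \<in> span2 E U" for \<alpha> \<beta> \<gamma>
  proof -
    obtain s t where st: "(\<lambda>i. \<alpha> * E i + \<beta> * U i + \<gamma> * V i) = (\<lambda>i. s * E i + t * U i)"
      using mem by (rule span2_E)
    have "(\<alpha> - s) * E i + (\<beta> - t) * U i + \<gamma> * V i + 0 * W i = 0" for i
      using fun_cong[OF st, of i] by (simp add: algebra_simps)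
    then show ?thesis using det4_nonzero_independent[OF det] by blast
  qed
  have coeffV: "\<beta> = 0" if mem: "(\<lambda>i. \<alpha> * E i + \<beta> * U i + \<gamma> * V i) \<in> span2 E V" for \<alpha> \<beta> \<gamma>
  proof -
    obtain s t where st: "(\<lambda>i. \<alpha> * E i + \<beta> * U i + \<gamma> * V i) = (\<lambda>i. s * E i + t * V i)"
      using mem by (rule span2_E)
    have "(\<alpha> - s) * E i + \<beta> * U i + (\<gamma> - t) * V i + 0 * W i = 0" for i
      using fun_cong[OF st, of i] by (simp add: algebra_simps)
    then show ?thesis using det4_nonzero_independent[OF det] by blast
  qed
  have "\<exists>\<alpha> \<beta> \<gamma>. k1 * \<alpha> + k2 * \<beta> + k3 * \<gamma> = 0 \<and> \<beta> \<noteq> 0 \<and> \<gamma> \<noteq> 0"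
  proof (cases "k1 = 0")
    case True
    then show ?thesis using nd by (intro exI[of _ 0] exI[of _ "- k3"] exI[of _ k2]) (simp add: algebra_simps)
  next
    case False
    then show ?thesis by (intro exI[of _ "- k2 - k3"] exI[of _ k1] exI[of _ k1]) (simp add: algebra_simps)
  qed
  then obtain \<alpha> \<beta> \<gamma> where "(\<lambda>i. \<alpha> * E i + \<beta> * U i + \<gamma> * V i) \<in> M" "\<beta> \<noteq> 0" "\<gamma> \<noteq> 0"
    unfolding M_def by blast
  then show "M \<noteq> span2 E U" "M \<noteq> span2 E V" using coeffU coeffV by metis+
qed

lemma rational_kernel_basis:
  fixes k1 k2 k3 :: rat
  assumes "k1 \<noteq> 0 \<or> k3 \<noteq> 0"
  obtains a1 b1 c1 a2 b2 c2 :: rat where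
    "k1 * a1 + k2 * b1 + k3 * c1 = 0" "k1 * a2 + k2 * b2 + k3 * c2 = 0"
    "\<And>s t. s * a1 + t * a2 = 0 \<and> s * b1 + t * b2 = 0 \<and> s * c1 + t * c2 = 0 \<Longrightarrow> s = 0 \<and> t = 0"
    "\<And>\<alpha> \<beta> \<gamma> :: complex. of_rat k1 * \<alpha> + of_rat k2 * \<beta> + of_rat k3 * \<gamma> = 0 \<Longrightarrow>
       \<exists>s t. \<alpha> = s * of_rat a1 + t * of_rat a2 \<and> \<beta> = s * of_rat b1 + t * of_rat b2
         \<and> \<gamma> = s * of_rat c1 + t * of_rat c2"
proof (cases "k1 = 0")
  case False
  show ?thesis
  proof (rule that[of "- k2" k1 0 "- k3" 0 k1])
    fix \<alpha> \<beta> \<gamma> :: complex assume h: "of_rat k1 * \<alpha> + of_rat k2 * \<beta> + of_rat k3 * \<gamma> = 0"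
    have K: "(of_rat k1 :: complex) \<noteq> 0" using False by simp
    have "of_rat k1 * \<alpha> = - (of_rat k2 * \<beta> + of_rat k3 * \<gamma>)"
      using h by (simp add: eq_neg_iff_add_eq_0 algebra_simps)
    then have "\<alpha> = (\<beta> / of_rat k1) * of_rat (- k2) + (\<gamma> / of_rat k1) * of_rat (- k3)"
      using K by (simp add: field_simps of_rat_minus)
    then show "\<exists>s t. \<alpha> = s * of_rat (- k2) + t * of_rat (- k3) \<and> \<beta> = s * of_rat k1 + t * of_rat 0
        \<and> \<gamma> = s * of_rat 0 + t * of_rat k1"
      using K by (intro exI[of _ "\<beta> / of_rat k1"] exI[of _ "\<gamma> / of_rat k1"]) simp
  qed (use False in \<open>simp_all add: algebra_simps\<close>)
next
  case True
  then have k3: "k3 \<noteq> 0" using assms by simp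
  show ?thesis
  proof (rule that[of 1 0 0 0 k3 "- k2"])
    fix \<alpha> \<beta> \<gamma> :: complex assume h: "of_rat k1 * \<alpha> + of_rat k2 * \<beta> + of_rat k3 * \<gamma> = 0"
    have K: "(of_rat k3 :: complex) \<noteq> 0" using k3 by simp
    have "of_rat k3 * \<gamma> = - (of_rat k2 * \<beta>)"
      using h True by (simp add: eq_neg_iff_add_eq_0 algebra_simps)
    then have "\<gamma> = (\<beta> / of_rat k3) * of_rat (- k2)"
      using K by (simp add: field_simps of_rat_minus)
    then show "\<exists>s t. \<alpha> = s * of_rat 1 + t * of_rat 0 \<and> \<beta> = s * of_rat 0 + t * of_rat k3
        \<and> \<gamma> = s * of_rat 0 + t * of_rat (- k2)"
      using K by (intro exI[of _ \<alpha>] exI[of _ "\<beta> / of_rat k3"]) simp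
  qed (use True k3 in \<open>simp_all add: algebra_simps\<close>)
qed

lemma span2_eq_kernel_in_span3:
  fixes E U V :: "nat \<Rightarrow> 'a::field"
  assumes "k1 * a1 + k2 * b1 + k3 * c1 = 0" "k1 * a2 + k2 * b2 + k3 * c2 = 0"
    and kernel: "\<And>\<alpha> \<beta> \<gamma>. k1 * \<alpha> + k2 * \<beta> + k3 * \<gamma> = 0 \<Longrightarrow>
      \<exists>s t. \<alpha> = s * a1 + t * a2 \<and> \<beta> = s * b1 + t * b2 \<and> \<gamma> = s * c1 + t * c2"
  shows "span2 (\<lambda>i. a1 * E i + b1 * U i + c1 * V i) (\<lambda>i. a2 * E i + b2 * U i + c2 * V i)
    = {\<lambda>i. \<alpha> * E i + \<beta> * U i + \<gamma> * V i | \<alpha> \<beta> \<gamma>. k1 * \<alpha> + k2 * \<beta> + k3 * \<gamma> = 0}"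
proof (rule subset_antisym)
  show "span2 (\<lambda>i. a1 * E i + b1 * U i + c1 * V i) (\<lambda>i. a2 * E i + b2 * U i + c2 * V i)
      \<subseteq> {\<lambda>i. \<alpha> * E i + \<beta> * U i + \<gamma> * V i | \<alpha> \<beta> \<gamma>. k1 * \<alpha> + k2 * \<beta> + k3 * \<gamma> = 0}"
  proof
    fix x assume "x \<in> span2 (\<lambda>i. a1 * E i + b1 * U i + c1 * V i) (\<lambda>i. a2 * E i + b2 * U i + c2 * V i)"
    then obtain s t where "x = (\<lambda>i. s * (a1 * E i + b1 * U i + c1 * V i) + t * (a2 * E i + b2 * U i + c2 * V i))"
      by (rule span2_E)
    then have "x = (\<lambda>i. (s * a1 + t * a2) * E i + (s * b1 + t * b2) * U i + (s * c1 + t * c2) * V i)"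
      by (simp add: algebra_simps)
    moreover have "k1 * (s * a1 + t * a2) + k2 * (s * b1 + t * b2) + k3 * (s * c1 + t * c2)
        = s * (k1 * a1 + k2 * b1 + k3 * c1) + t * (k1 * a2 + k2 * b2 + k3 * c2)"
      by (simp add: algebra_simps)
    ultimately show "x \<in> {\<lambda>i. \<alpha> * E i + \<beta> * U i + \<gamma> * V i | \<alpha> \<beta> \<gamma>. k1 * \<alpha> + k2 * \<beta> + k3 * \<gamma> = 0}"
      using assms(1,2) by auto
  qed
  show "{\<lambda>i. \<alpha> * E i + \<beta> * U i + \<gamma> * V i | \<alpha> \<beta> \<gamma>. k1 * \<alpha> + k2 * \<beta> + k3 * \<gamma> = 0}
      \<subseteq> span2 (\<lambda>i. a1 * E i + b1 * U i + c1 * V i) (\<lambda>i. a2 * E i + b2 * U i + c2 * V i)"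
  proof clarify
    fix \<alpha> \<beta> \<gamma> assume "k1 * \<alpha> + k2 * \<beta> + k3 * \<gamma> = 0"
    then obtain s t where "\<alpha> = s * a1 + t * a2" "\<beta> = s * b1 + t * b2" "\<gamma> = s * c1 + t * c2"
      using kernel by blast
    then have "(\<lambda>i. \<alpha> * E i + \<beta> * U i + \<gamma> * V i)
        = (\<lambda>i. s * (a1 * E i + b1 * U i + c1 * V i) + t * (a2 * E i + b2 * U i + c2 * V i))"
      by (simp add: algebra_simps)
    then show "(\<lambda>i. \<alpha> * E i + \<beta> * U i + \<gamma> * V i)
        \<in> span2 (\<lambda>i. a1 * E i + b1 * U i + c1 * V i) (\<lambda>i. a2 * E i + b2 * U i + c2 * V i)"
      by (simp only: span2_I)
  qed
qed

lemma residual_qline: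
  fixes k1 k2 k3 :: rat
  assumes "e \<in> Q4" "u \<in> Q4" "v \<in> Q4" "indep3 e u v" "k1 \<noteq> 0 \<or> k3 \<noteq> 0"
  obtains L where "qline L"
    "cspan L = {\<lambda>i. \<alpha> * of_rat_vec e i + \<beta> * of_rat_vec u i + \<gamma> * of_rat_vec v i | \<alpha> \<beta> \<gamma>.
       of_rat k1 * \<alpha> + of_rat k2 * \<beta> + of_rat k3 * \<gamma> = 0}"
proof -
  obtain a1 b1 c1 a2 b2 c2 :: rat where
    ker: "k1 * a1 + k2 * b1 + k3 * c1 = 0" "k1 * a2 + k2 * b2 + k3 * c2 = 0"
    and indep: "\<And>s t. s * a1 + t * a2 = 0 \<and> s * b1 + t * b2 = 0 \<and> s * c1 + t * c2 = 0 \<Longrightarrow> s = 0 \<and> t = 0"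
    and span: "\<And>\<alpha> \<beta> \<gamma> :: complex. of_rat k1 * \<alpha> + of_rat k2 * \<beta> + of_rat k3 * \<gamma> = 0 \<Longrightarrow>
       \<exists>s t. \<alpha> = s * of_rat a1 + t * of_rat a2 \<and> \<beta> = s * of_rat b1 + t * of_rat b2
         \<and> \<gamma> = s * of_rat c1 + t * of_rat c2"
    using rational_kernel_basis[of k1 k3 k2, OF assms(5)] by blast
  define p q where "p = (\<lambda>i. a1 * e i + b1 * u i + c1 * v i)" and "q = (\<lambda>i. a2 * e i + b2 * u i + c2 * v i)"
  have "p \<in> Q4" "q \<in> Q4" using assms(1-3) unfolding p_def q_def Q4_def by auto
  moreover have "indep2 p q" unfolding indep2_def
  proof (intro allI impI)
    fix s t assume h: "\<forall>i<4. s * p i + t * q i = 0"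
    have "(s * a1 + t * a2) * e i + (s * b1 + t * b2) * u i + (s * c1 + t * c2) * v i = 0"
      if "i < 4" for i
    proof -
      have "(s * a1 + t * a2) * e i + (s * b1 + t * b2) * u i + (s * c1 + t * c2) * v i
          = s * p i + t * q i"
        unfolding p_def q_def by (simp add: algebra_simps)
      then show ?thesis using h that by simp
    qed
    then have "s * a1 + t * a2 = 0 \<and> s * b1 + t * b2 = 0 \<and> s * c1 + t * c2 = 0"
      by (rule indep3D[OF assms(4)])
    then show "s = 0 \<and> t = 0" by (rule indep)
  qed
  ultimately have "qline (span2 p q)" unfolding qline_iff by blast
  moreover have P: "of_rat_vec p
      = (\<lambda>i. of_rat a1 * of_rat_vec e i + of_rat b1 * of_rat_vec u i + of_rat c1 * of_rat_vec v i)"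
    and Q: "of_rat_vec q
      = (\<lambda>i. of_rat a2 * of_rat_vec e i + of_rat b2 * of_rat_vec u i + of_rat c2 * of_rat_vec v i)"
    unfolding p_def q_def of_rat_vec_def by (simp_all add: of_rat_add of_rat_mult)
  have "(of_rat (k1 * a1 + k2 * b1 + k3 * c1) :: complex) = 0"
    "(of_rat (k1 * a2 + k2 * b2 + k3 * c2) :: complex) = 0" using ker by simp_all
  then have ker': "of_rat k1 * of_rat a1 + of_rat k2 * of_rat b1 + of_rat k3 * of_rat c1 = (0::complex)"
    "of_rat k1 * of_rat a2 + of_rat k2 * of_rat b2 + of_rat k3 * of_rat c2 = (0::complex)"
    by (simp_all add: of_rat_add of_rat_mult)
  have "cspan (span2 p q) = {\<lambda>i. \<alpha> * of_rat_vec e i + \<beta> * of_rat_vec u i + \<gamma> * of_rat_vec v i | \<alpha> \<beta> \<gamma>.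
      of_rat k1 * \<alpha> + of_rat k2 * \<beta> + of_rat k3 * \<gamma> = 0}"
    unfolding cspan_span2 P Q by (rule span2_eq_kernel_in_span3[OF ker' span])
  ultimately show ?thesis using that by blast
qed

definition linform :: "(nat \<Rightarrow> complex) \<Rightarrow> (nat \<Rightarrow> complex) \<Rightarrow> complex" where
  "linform \<eta> x = (\<Sum>i<4. \<eta> i * x i)"

lemma linform_lincomb: "linform \<eta> (\<lambda>i. s * x i + t * y i) = s * linform \<eta> x + t * linform \<eta> y"
  by (simp add: linform_def sum_lessThan_4 algebra_simps)

lemma linform_lincomb3:
  "linform \<eta> (\<lambda>i. a * x i + b * y i + c * z i) = a * linform \<eta> x + b * linform \<eta> y + c * linform \<eta> z"
  by (simp add: linform_def sum_lessThan_4 algebra_simps)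

lemma linform_add: "linform \<eta> (\<lambda>i. x i + y i) = linform \<eta> x + linform \<eta> y"
  by (simp add: linform_def sum_lessThan_4 algebra_simps)

lemma span3_equation:
  fixes E U V W :: "nat \<Rightarrow> complex"
  assumes det: "det4 (col4 E U V W) \<noteq> 0" and C4: "E \<in> C4" "U \<in> C4" "V \<in> C4"
  obtains \<eta> where "\<And>x. x \<in> C4 \<Longrightarrow> x \<in> span3 E U V \<longleftrightarrow> linform \<eta> x = 0"
proof -
  obtain \<eta> where \<eta>: "linform \<eta> E = 0" "linform \<eta> U = 0" "linform \<eta> V = 0" "linform \<eta> W = 1"
    using det4_nonzero_dual[OF det] unfolding linform_def by blast
  have "x \<in> span3 E U V \<longleftrightarrow> linform \<eta> x = 0" if x: "x \<in> C4" for x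
  proof
    assume "x \<in> span3 E U V"
    then obtain \<alpha> \<beta> \<gamma> where "x = (\<lambda>i. \<alpha> * E i + \<beta> * U i + \<gamma> * V i)" unfolding span3_def by blast
    then show "linform \<eta> x = 0" using \<eta> by (simp add: linform_lincomb3)
  next
    assume x0: "linform \<eta> x = 0"
    obtain a b c d where abcd: "\<forall>i<4. x i = a * E i + b * U i + c * V i + d * W i"
      by (rule det4_nonzero_spanning[OF det])
    then have "linform \<eta> x = a * linform \<eta> E + b * linform \<eta> U + c * linform \<eta> V + d * linform \<eta> W"
      by (simp add: linform_def sum_lessThan_4 algebra_simps)
    then have "d = 0" using x0 \<eta> by simp
    have "x = (\<lambda>i. a * E i + b * U i + c * V i)"
    proof
      fix i :: nat
      show "x i = a * E i + b * U i + c * V i"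
        using abcd \<open>d = 0\<close> x C4 by (cases "i < 4") (auto simp: C4_def)
    qed
    then show "x \<in> span3 E U V" by (simp only: span3I)
  qed
  then show ?thesis using that by blast
qed

lemma plane_section_third_line:
  assumes "smooth_cubic F" "L1 \<in> rational_lines F" "L2 \<in> rational_lines F" "L1 \<noteq> L2"
    "\<not> lines_disjoint L1 L2"
  obtains L3 where "L3 \<in> rational_lines F" "L3 \<noteq> L1" "L3 \<noteq> L2"
    "{x \<in> plane_span L1 L2. cubic_eval F x = 0} = cspan L1 \<union> cspan L2 \<union> cspan L3"
proof -
  have ql: "qline L1" "qline L2" and on: "line_on_surface F L1" "line_on_surface F L2"
    using assms(2,3) unfolding rational_lines_def by auto
  obtain e u v w where frame: "e \<in> Q4" "u \<in> Q4" "v \<in> Q4" "L1 = span2 e u" "L2 = span2 e v"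
    "det4 (col4 e u v w) \<noteq> 0"
    by (rule meeting_qlines_frame[OF ql assms(4,5)])
  define E U V W where "E = of_rat_vec e" and "U = of_rat_vec u" and "V = of_rat_vec v"
    and "W = of_rat_vec w"
  have C: "cspan L1 = span2 E U" "cspan L2 = span2 E V"
    unfolding frame(4,5) cspan_span2 E_def U_def V_def by simp_all
  have det: "det4 (col4 E U V W) \<noteq> 0"
    using frame(6) unfolding E_def U_def V_def W_def det4_of_rat_vec by simp
  have EU: "\<forall>x\<in>span2 E U. cubic_eval F x = 0" and EV: "\<forall>x\<in>span2 E V. cubic_eval F x = 0"
    using on unfolding line_on_surface_def C by simp_all
  define k1 k2 k3 where "k1 = 6 * cubic_polar F e u v" and "k2 = 3 * cubic_polar F u u v"
    and "k3 = 3 * cubic_polar F u v v"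
  have K: "of_rat k1 = 6 * cubic_polar F E U V" "of_rat k2 = 3 * cubic_polar F U U V"
    "of_rat k3 = 3 * cubic_polar F U V V"
    unfolding k1_def k2_def k3_def E_def U_def V_def of_rat_vec_def
    by (simp_all add: cubic_polar_of_rat of_rat_mult)
  have factor: "cubic_eval F (\<lambda>i. \<alpha> * E i + \<beta> * U i + \<gamma> * V i)
      = \<beta> * \<gamma> * (of_rat k1 * \<alpha> + of_rat k2 * \<beta> + of_rat k3 * \<gamma>)" for \<alpha> \<beta> \<gamma>
    unfolding K by (rule cubic_eval_plane_factor[OF EU EV])
  have nd: "of_rat k1 \<noteq> (0::complex) \<or> (of_rat k2 \<noteq> (0::complex) \<and> of_rat k3 \<noteq> (0::complex))"
    unfolding K using residual_factor_nondegenerate[OF assms(1) det EU EV] by simp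
  then have "k1 \<noteq> 0 \<or> k3 \<noteq> 0" by auto
  then obtain L3 where L3: "qline L3" "cspan L3 = {\<lambda>i. \<alpha> * E i + \<beta> * U i + \<gamma> * V i | \<alpha> \<beta> \<gamma>.
      of_rat k1 * \<alpha> + of_rat k2 * \<beta> + of_rat k3 * \<gamma> = 0}"
    using residual_qline[OF frame(1-3) det4_nonzero_indep3[OF frame(6)]]
    unfolding E_def U_def V_def by blast
  have plane_section: "{x \<in> plane_span L1 L2. cubic_eval F x = 0} = cspan L1 \<union> cspan L2 \<union> cspan L3"
    unfolding plane_span_eq_span3[OF C] span3_zero_set_of_factor[OF factor] C L3(2) ..
  then have "line_on_surface F L3" unfolding line_on_surface_def by blast
  moreover have "L3 \<noteq> L1" "L3 \<noteq> L2" using residual_line_distinct[OF det nd] L3(2) C by auto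
  ultimately show ?thesis using that L3(1) plane_section unfolding rational_lines_def by blast
qed

lemma plane_span_equation:
  assumes "qline L1" "qline L2" "L1 \<noteq> L2" "\<not> lines_disjoint L1 L2"
  obtains \<eta> where "\<And>x. x \<in> C4 \<Longrightarrow> x \<in> plane_span L1 L2 \<longleftrightarrow> linform \<eta> x = 0"
proof -
  obtain e u v w where frame: "e \<in> Q4" "u \<in> Q4" "v \<in> Q4" "L1 = span2 e u" "L2 = span2 e v"
    "det4 (col4 e u v w) \<noteq> 0"
    by (rule meeting_qlines_frame[OF assms])
  then have "plane_span L1 L2 = span3 (of_rat_vec e) (of_rat_vec u) (of_rat_vec v)"
    by (simp add: plane_span_eq_span3 cspan_span2)
  moreover obtain \<eta> where "\<And>x. x \<in> C4 \<Longrightarrow>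
      x \<in> span3 (of_rat_vec e) (of_rat_vec u) (of_rat_vec v) \<longleftrightarrow> linform \<eta> x = 0"
    using span3_equation[of "of_rat_vec e" "of_rat_vec u" "of_rat_vec v" "of_rat_vec w"]
      frame(1-3,6) of_rat_vec_C4 det4_of_rat_vec by auto
  ultimately show ?thesis using that by simp
qed

section \<open>Lines meeting the plane\<close>

lemma line_meets_hyperplane:
  assumes "qline d" "z \<in> cspan d" "linform \<eta> z \<noteq> 0"
  obtains x0 where "x0 \<in> cspan d" "x0 \<noteq> (\<lambda>i. 0)" "linform \<eta> x0 = 0"
    "\<And>y. y \<in> cspan d \<Longrightarrow> linform \<eta> y = 0 \<Longrightarrow> \<exists>c. y = (\<lambda>i. c * x0 i)"
proof -
  obtain p q where pq: "indep2 p q" "cspan d = span2 (of_rat_vec p) (of_rat_vec q)"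
    using assms(1) by (rule qline_obtain)
  define P Q where "P = of_rat_vec p" and "Q = of_rat_vec q"
  have iPQ: "indep2 P Q" unfolding P_def Q_def by (rule indep2_of_rat_vec[OF pq(1)])
  define a b where "a = linform \<eta> P" and "b = linform \<eta> Q"
  obtain s t where "z = (\<lambda>i. s * P i + t * Q i)" using assms(2) unfolding pq(2) P_def Q_def by (rule span2_E)
  then have ab: "a \<noteq> 0 \<or> b \<noteq> 0" using assms(3) unfolding a_def b_def by (auto simp: linform_lincomb)
  define x0 where "x0 = (\<lambda>i. b * P i + (- a) * Q i)"
  have "x0 \<in> cspan d" unfolding x0_def pq(2) P_def[symmetric] Q_def[symmetric] by (rule span2_I)
  moreover have "x0 \<noteq> (\<lambda>i. 0)"
  proof
    assume "x0 = (\<lambda>i. 0)"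
    then have "b * P i + (- a) * Q i = 0" for i unfolding x0_def by metis
    then show False using indep2D[OF iPQ, of b "- a"] ab by simp
  qed
  moreover have "linform \<eta> x0 = 0" unfolding x0_def linform_lincomb a_def b_def by simp
  moreover have "\<exists>c. y = (\<lambda>i. c * x0 i)" if y_on: "y \<in> cspan d" "linform \<eta> y = 0" for y
  proof -
    obtain s t where y: "y = (\<lambda>i. s * P i + t * Q i)"
      using y_on(1) unfolding pq(2) P_def[symmetric] Q_def[symmetric] by (rule span2_E)
    then have st: "s * a + t * b = 0" using y_on(2) unfolding a_def b_def by (simp add: linform_lincomb)
    show ?thesis
    proof (cases "a = 0")
      case True
      then have "t = 0" using st ab by simp
      then show ?thesis using True ab unfolding y x0_def by (intro exI[of _ "s / b"]) auto
    next
      case False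
      then have s: "s = (- t / a) * b" using st by (simp add: field_simps add_eq_0_iff)
      have "y = (\<lambda>i. (- t / a) * x0 i)"
      proof
        fix i
        have "(- t / a) * x0 i = ((- t / a) * b) * P i + t * Q i"
          unfolding x0_def using False by (simp add: field_simps)
        then show "y i = (- t / a) * x0 i" unfolding y s by simp
      qed
      then show ?thesis by blast
    qed
  qed
  ultimately show ?thesis using that by blast
qed

lemma plane_span_inter_hyperplane:
  assumes "qline L" "x0 \<in> cspan L"
    and L: "\<And>y. y \<in> cspan L \<Longrightarrow> linform \<eta> y = 0"
    and d: "\<And>y. y \<in> cspan d \<Longrightarrow> linform \<eta> y = 0 \<Longrightarrow> \<exists>c. y = (\<lambda>i. c * x0 i)"
    and y: "y \<in> plane_span L d" "linform \<eta> y = 0"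
  shows "y \<in> cspan L"
proof -
  obtain z z' where zz: "y = (\<lambda>i. z i + z' i)" "z \<in> cspan L" "z' \<in> cspan d"
    using y(1) unfolding plane_span_def by blast
  have "linform \<eta> z' = 0" using y(2) L[OF zz(2)] unfolding zz(1) linform_add by simp
  then obtain c where "z' = (\<lambda>i. c * x0 i)" using d[OF zz(3)] by blast
  then have "z' \<in> cspan L" using cspan_closed[OF assms(1,2,2), of c 0] by simp
  then have "(\<lambda>i. 1 * z i + 1 * z' i) \<in> cspan L" using cspan_closed[OF assms(1) zz(2)] by blast
  then show ?thesis unfolding zz(1) by simp
qed

lemma span2_subset_cspan_of_two_points:
  assumes "qline L" "(\<lambda>i. P i + of_nat k * Q i) \<in> cspan L" "(\<lambda>i. P i + of_nat l * Q i) \<in> cspan L"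
    "k \<noteq> l"
  shows "span2 P Q \<subseteq> cspan L"
proof -
  define c where "c = (of_nat l - of_nat k :: complex)"
  have c: "c \<noteq> 0" using assms(4) unfolding c_def by simp
  have "Q = (\<lambda>i. (1/c) * (P i + of_nat l * Q i) + (-1/c) * (P i + of_nat k * Q i))"
  proof
    fix i
    have "(1/c) * (P i + of_nat l * Q i) + (-1/c) * (P i + of_nat k * Q i) = (1/c) * (c * Q i)"
      unfolding c_def by (simp add: algebra_simps)
    then show "Q i = (1/c) * (P i + of_nat l * Q i) + (-1/c) * (P i + of_nat k * Q i)"
      using c by simp
  qed
  then have Q: "Q \<in> cspan L" using cspan_closed[OF assms(1,3,2)] by metis
  have "P = (\<lambda>i. 1 * (P i + of_nat k * Q i) + (- of_nat k) * Q i)" by (simp add: algebra_simps)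
  then have "P \<in> cspan L" using cspan_closed[OF assms(1,2) Q] by metis
  moreover obtain p q where "cspan L = span2 (of_rat_vec p) (of_rat_vec q)"
    using assms(1) by (rule qline_obtain)
  ultimately show ?thesis using span2_subset Q by metis
qed

text \<open>By pigeonhole two of the points \<open>P + k Q\<close>, \<open>k < 4\<close>, of the line \<open>d\<close> lie on the same \<open>L\<^sub>i\<close>.\<close>

lemma qline_subset_Un3:
  assumes "qline d" "qline L1" "qline L2" "qline L3"
    and cover: "cspan d \<subseteq> cspan L1 \<union> cspan L2 \<union> cspan L3"
  shows "d \<in> {L1, L2, L3}"
proof -
  obtain p q where pq: "cspan d = span2 (of_rat_vec p) (of_rat_vec q)"
    using assms(1) by (rule qline_obtain)
  define P Q where "P = of_rat_vec p" and "Q = of_rat_vec q"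
  have "\<exists>L. L \<in> {L1, L2, L3} \<and> (\<lambda>i. P i + of_nat k * Q i) \<in> cspan L" for k :: nat
  proof -
    have "(\<lambda>i. 1 * P i + of_nat k * Q i) \<in> cspan d" unfolding pq P_def Q_def by (rule span2_I)
    then have "(\<lambda>i. P i + of_nat k * Q i) \<in> cspan L1 \<union> cspan L2 \<union> cspan L3" using cover by auto
    then show ?thesis by blast
  qed
  then obtain f where f: "\<forall>k. f k \<in> {L1, L2, L3} \<and> (\<lambda>i. P i + of_nat k * Q i) \<in> cspan (f k)"
    using choice[of "\<lambda>k L. L \<in> {L1, L2, L3} \<and> (\<lambda>i. P i + of_nat k * Q i) \<in> cspan L"] by blast
  have "card (f ` {..<4::nat}) \<le> card {L1, L2, L3}" using f by (intro card_mono) auto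
  also have "\<dots> \<le> 3" by (auto simp: card_insert_if)
  finally have "\<not> inj_on f {..<4}" by (intro pigeonhole) simp
  then obtain k l where kl: "k \<noteq> l" "f k = f l" unfolding inj_on_def by blast
  have qk: "qline (f k)" using f assms(2-4) by auto
  have "(\<lambda>i. P i + of_nat l * Q i) \<in> cspan (f k)" using f kl(2) by metis
  then have "span2 P Q \<subseteq> cspan (f k)"
    using span2_subset_cspan_of_two_points[OF qk _ _ kl(1)] f by blast
  then have "d = f k" using cspan_subset_imp_eq[OF assms(1) qk] unfolding pq P_def Q_def by blast
  then show ?thesis using f by simp
qed

lemma rational_line_in_plane_section:
  assumes "smooth_cubic F" "rational_lines F = insert d T" "d \<notin> T"
    and P: "\<And>x. x \<in> C4 \<Longrightarrow> x \<in> P \<longleftrightarrow> linform \<eta> x = 0"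
    and section_eq: "{x \<in> P. cubic_eval F x = 0} = (\<Union>L\<in>T. cspan L)"
  shows "cspan d \<subseteq> (\<Union>L\<in>T. cspan L)"
proof -
  have T: "L \<in> rational_lines F" "qline L" if "L \<in> T" for L
    using that assms(2) unfolding rational_lines_def by auto
  have plane: "linform \<eta> x = 0" if "L \<in> T" "x \<in> cspan L" for L x
    using that P equalityD2[OF section_eq] cspan_C4[OF T(2)[OF that(1)]] by blast
  have cover: "\<exists>L\<in>T. x \<in> cspan L" if "x \<in> C4" "linform \<eta> x = 0" "cubic_eval F x = 0" for x
    using that P equalityD1[OF section_eq] by blast
  have d: "d \<in> rational_lines F" using assms(2) by blast
  then have qd: "qline d" and d_on: "line_on_surface F d" unfolding rational_lines_def by auto
  have "linform \<eta> z = 0" if z: "z \<in> cspan d" for z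
  proof (rule ccontr)
    assume "linform \<eta> z \<noteq> 0"
    then obtain x0 where x0: "x0 \<in> cspan d" "x0 \<noteq> (\<lambda>i. 0)" "linform \<eta> x0 = 0"
      and d_meet: "\<And>y. y \<in> cspan d \<Longrightarrow> linform \<eta> y = 0 \<Longrightarrow> \<exists>c. y = (\<lambda>i. c * x0 i)"
      using line_meets_hyperplane[OF qd z] by blast
    have "x0 \<in> C4" "cubic_eval F x0 = 0"
      using x0(1) cspan_C4[OF qd] d_on unfolding line_on_surface_def by auto
    then obtain L where L: "L \<in> T" "x0 \<in> cspan L" using cover x0(3) by blast
    have "L \<noteq> d" using L(1) assms(3) by blast
    moreover have "\<not> lines_disjoint L d" using x0 L(2) unfolding lines_disjoint_def by blast
    ultimately obtain L4 where L4: "L4 \<in> rational_lines F" "L4 \<noteq> L" "L4 \<noteq> d"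
      "{x \<in> plane_span L d. cubic_eval F x = 0} = cspan L \<union> cspan d \<union> cspan L4"
      by (rule plane_section_third_line[OF assms(1) T(1)[OF L(1)] d])
    have "L4 \<in> T" using L4(1,3) unfolding assms(2) by blast
    have qL4: "qline L4" using L4(1) unfolding rational_lines_def by blast
    have "cspan L4 \<subseteq> cspan L"
    proof
      fix y assume y: "y \<in> cspan L4"
      then have "y \<in> {x \<in> plane_span L d. cubic_eval F x = 0}" using equalityD2[OF L4(4)] by blast
      then have "y \<in> plane_span L d" "linform \<eta> y = 0" using y plane[OF \<open>L4 \<in> T\<close>] by simp_all
      then show "y \<in> cspan L"
        using plane_span_inter_hyperplane[OF T(2)[OF L(1)] L(2) plane[OF L(1)] d_meet] by blast
    qed
    then have "L4 = L" by (rule cspan_subset_imp_eq[OF qL4 T(2)[OF L(1)]])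
    then show False using L4(2) by simp
  qed
  then show ?thesis using cover cspan_C4[OF qd] d_on unfolding line_on_surface_def by blast
qed

theorem corollary4p12:
  fixes F :: cubic_form
  assumes "smooth_cubic F"
    and "\<not> (\<exists>L1 L2 L3. L1 \<in> rational_lines F \<and> L2 \<in> rational_lines F \<and> L3 \<in> rational_lines F \<and>
             lines_disjoint L1 L2 \<and> lines_disjoint L1 L3 \<and> lines_disjoint L2 L3)"
  shows "card (rational_lines F) \<noteq> 4"
proof
  assume four: "card (rational_lines F) = 4"
  then have "3 \<le> card (rational_lines F)" by simp
  then obtain L1 L2 where L12: "L1 \<in> rational_lines F" "L2 \<in> rational_lines F" "L1 \<noteq> L2"
    "\<not> lines_disjoint L1 L2"
    by (rule exists_unrelated_pair[OF _ assms(2)])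
  obtain L3 where L3: "L3 \<in> rational_lines F" "L3 \<noteq> L1" "L3 \<noteq> L2"
    and plane_section: "{x \<in> plane_span L1 L2. cubic_eval F x = 0} = cspan L1 \<union> cspan L2 \<union> cspan L3"
    by (rule plane_section_third_line[OF assms(1) L12])
  obtain \<eta> where plane: "\<And>x. x \<in> C4 \<Longrightarrow> x \<in> plane_span L1 L2 \<longleftrightarrow> linform \<eta> x = 0"
    using plane_span_equation L12 unfolding rational_lines_def by blast
  obtain d where d: "rational_lines F = insert d {L1, L2, L3}" "d \<notin> {L1, L2, L3}"
    using card_4_insert_fourth[OF four L12(1,2) L3(1) L12(3)] L3(2,3) by blast
  have "cspan d \<subseteq> cspan L1 \<union> cspan L2 \<union> cspan L3"
    using rational_line_in_plane_section[OF assms(1) d plane] plane_section by auto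
  moreover have "qline d" "qline L1" "qline L2" "qline L3"
    using d(1) L12(1,2) L3(1) unfolding rational_lines_def by auto
  ultimately have "d \<in> {L1, L2, L3}" using qline_subset_Un3 by blast
  then show False using d(2) by simp
qed

end
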